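(* In the setting described in the context, for every $k\ge0$ and $\mathbf v\in\mathbb{R}^M$, $$h_k(\mathbf v)=\sum_{\alpha_1,\dots,\alpha_k}\lambda_{\alpha_1}\cdots\lambda_{\alpha_k}\int_{[-\pi,\pi]^k}\rho(\theta_1)\cdots\rho(\theta_k)\,\mathrm{d}\theta_1\cdots\mathrm{d}\theta_k\int_{\mathbb{R}^M}h_{0,U_k(\underline\alpha,\underline\theta)}\Big(\Gamma_k(\underline\alpha,\underline\theta)V_k^T(\underline\alpha,\underline\theta)\mathbf v+\big(I_M-\Gamma_k^2(\underline\alpha,\underline\theta)\big)^{1/2}\mathbf w\Big)e^{-\pi|\mathbf w|^2}\,\mathrm{d}\mathbf w,$$ where $h_{0,U}(\mathbf x):=h_0(U\mathbf x)$.
   Context: Let $M,N$ be positive integers, $\lambda_S,\lambda_R,\mu>0$, and $\rho$ a probability density on $[-\pi,\pi]$. Coordinates of $\mathbf z=(\mathbf v,\mathbf w)\in\mathbb{R}^M\times\mathbb{R}^N$ are indexed $1,\dots,M+N$. For a pair $\alpha=(i,j)$, $1\le i<j\le M+N$, and $\theta\in[-\pi,\pi]$, $r_\alpha(\theta)$ is the rotation of $\mathbb{R}^{M+N}$ in the $(i,j)$ coordinate plane such that $r_\alpha(\theta)^{-1}\mathbf z$ has $i$-th coordinate $z_i\cos\theta-z_j\sin\theta$, $j$-th coordinate $z_i\sin\theta+z_j\cos\theta$, other coordinates unchanged. Let $\Lambda=\lambda_SM/2+\lambda_RN/2+\mu M$ and set $\lambda_{(i,j)}=\lambda_S/(\Lambda(M-1))$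 if $1\le i<j\le M$, $\lambda_{(i,j)}=\lambda_R/(\Lambda(N-1))$ if $M+1\le i<j\le M+N$, and $\lambda_{(i,j)}=\mu/(\Lambda N)$ if $1\le i\le M<j\le M+N$ (so $\sum_\alpha\lambda_\alpha=1$). Let $h_0$ be a nonnegative function on $\mathbb{R}^M$ such that $h_0(\mathbf v)e^{-\pi|\mathbf v|^2}$ is a probability density, and let $P(\mathbf v,\mathbf w)=\mathbf v$. Define $$h_k(\mathbf v)=\sum_{\alpha_1,\dots,\alpha_k}\lambda_{\alpha_1}\cdots\lambda_{\alpha_k}\int_{[-\pi,\pi]^k}\rho(\theta_1)\cdots\rho(\theta_k)\,\mathrm{d}\underline\theta\int_{\mathbb{R}^N}(h_0\circ P)\Big(\big[\textstyle\prod_{l=1}^kr_{\alpha_l}(\theta_l)\big]^{-1}(\mathbf v,\mathbf w)\Big)e^{-\pi|\mathbf w|^2}\,\mathrm{d}\mathbf w,$$ the sums running over all pairs. Write $\big[\prod_{l=1}^kr_{\alpha_l}(\theta_l)\big]^{-1}=\begin{pmatrix}A_k&B_k\\C_k&D_k\end{pmatrix}$ with $A_k=A_k(\underline\alpha,\underline\theta)\in\mathbb{R}^{M\times M}$, $B_k\in\mathbb{R}^{M\times N}$, and let $A_k=U_k\Gamma_kV_k^T$ be a singular value decomposition with $U_k,V_k$ orthogonal $M\times M$ matrices and $\Gamma_k=\mathrm{diag}(\gamma_{k,1},\dots,\gamma_{k,M})$, $\gamma_{k,j}\in[0,1]$ (all depending on $\underline\alpha=(\alpha_1,\dots,\alpha_k)$,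 $\underline\theta=(\theta_1,\dots,\theta_k)$). *)

theory Defs
  imports "HOL-Probability.Probability"
begin

text \<open>Conventions: coordinates of R^(M+N) are indexed 0,...,M+N-1 (0-based), vectors are
  functions nat => real; the first M coordinates form v, the last N form w.\<close>

definition pairs :: "nat \<Rightarrow> nat \<Rightarrow> (nat \<times> nat) set" where
  "pairs M N = {(i, j). i < j \<and> j < M + N}"

definition Lam :: "nat \<Rightarrow> nat \<Rightarrow> real \<Rightarrow> real \<Rightarrow> real \<Rightarrow> real" where
  "Lam M N lS lR mu = lS * real M / 2 + lR * real N / 2 + mu * real M"

definition lam :: "nat \<Rightarrow> nat \<Rightarrow> real \<Rightarrow> real \<Rightarrow> real \<Rightarrow> nat \<times> nat \<Rightarrow> real" where
  "lam M N lS lR mu \<alpha> = (case \<alpha> of (i, j) \<Rightarrow>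
     if j < M then lS / (Lam M N lS lR mu * (real M - 1))
     else if M \<le> i then lR / (Lam M N lS lR mu * (real N - 1))
     else mu / (Lam M N lS lR mu * real N))"

definition rot_inv :: "nat \<times> nat \<Rightarrow> real \<Rightarrow> (nat \<Rightarrow> real) \<Rightarrow> (nat \<Rightarrow> real)" where
  "rot_inv \<alpha> \<theta> z = (case \<alpha> of (i, j) \<Rightarrow>
     z(i := z i * cos \<theta> - z j * sin \<theta>, j := z i * sin \<theta> + z j * cos \<theta>))"

text \<open>[r_{a_1}(th_1) ... r_{a_k}(th_k)]^{-1} z = r_{a_k}^{-1}( ... r_{a_1}^{-1} z), with
  alpha_{l+1} = as ! l and theta_{l+1} = th l.\<close>
definition comp_rot_inv :: "(nat \<times> nat) list \<Rightarrow> (nat \<Rightarrow> real) \<Rightarrow> (nat \<Rightarrow> real) \<Rightarrow> (nat \<Rightarrow> real)" where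
  "comp_rot_inv as th z = fold (\<lambda>l z. rot_inv (as ! l) (th l) z) [0..<length as] z"

text \<open>Entry (p,q) of the matrix of comp_rot_inv; for p,q < M this is the block A_k.\<close>
definition A_blk :: "(nat \<times> nat) list \<Rightarrow> (nat \<Rightarrow> real) \<Rightarrow> nat \<Rightarrow> nat \<Rightarrow> real" where
  "A_blk as th p q = comp_rot_inv as th (\<lambda>r. if r = q then 1 else 0) p"

definition join_vw :: "nat \<Rightarrow> (nat \<Rightarrow> real) \<Rightarrow> (nat \<Rightarrow> real) \<Rightarrow> (nat \<Rightarrow> real)" where
  "join_vw M v w = (\<lambda>i. if i < M then v i else w (i - M))"

definition seqs :: "nat \<Rightarrow> nat \<Rightarrow> nat \<Rightarrow> (nat \<times> nat) list set" where
  "seqs M N k = {as. length as = k \<and> set as \<subseteq> pairs M N}"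

definition hk :: "nat \<Rightarrow> nat \<Rightarrow> real \<Rightarrow> real \<Rightarrow> real \<Rightarrow> (real \<Rightarrow> real)
    \<Rightarrow> ((nat \<Rightarrow> real) \<Rightarrow> real) \<Rightarrow> nat \<Rightarrow> (nat \<Rightarrow> real) \<Rightarrow> ennreal" where
  "hk M N lS lR mu rho h0 k v =
    (\<Sum>as\<in>seqs M N k.
       ennreal (\<Prod>l<k. lam M N lS lR mu (as ! l)) *
       (\<integral>\<^sup>+ th. ennreal (\<Prod>l<k. indicator {-pi..pi} (th l) * rho (th l)) *
          (\<integral>\<^sup>+ w. ennreal (h0 (restrict (comp_rot_inv as th (join_vw M v w)) {..<M})
                  * exp (- pi * (\<Sum>i<N. (w i)\<^sup>2)))
            \<partial>(PiM {..<N} (\<lambda>_. lborel)))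
        \<partial>(PiM {..<k} (\<lambda>_. lborel))))"

definition h0U :: "nat \<Rightarrow> ((nat \<Rightarrow> real) \<Rightarrow> real) \<Rightarrow> (nat \<Rightarrow> nat \<Rightarrow> real) \<Rightarrow> (nat \<Rightarrow> real) \<Rightarrow> real" where
  "h0U M h0 U x = h0 (restrict (\<lambda>p. \<Sum>q<M. U p q * x q) {..<M})"

end

theory Submission
  imports Defs "Jordan_Normal_Form.Determinant"
begin

text \<open>
  Write the inverse of the rotation product as an orthogonal matrix with blocks \<open>A\<close> and
  \<open>B\<close>. The inner integral of \<open>h\<^sub>k\<close> is the expectation of \<open>h\<^sub>0 (A v + B w)\<close> for \<open>w\<close> a standard
  Gaussian vector in \<open>R^N\<close> (density \<open>exp (- pi |w|^2)\<close>). With \<open>A = U \<Gamma> V\<^sup>T\<close> and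
  \<open>T = U\<^sup>T B\<close>, orthonormality of the rows of \<open>(A B)\<close> gives \<open>T T\<^sup>T = I - \<Gamma>\<^sup>2\<close>, and
  \<open>U\<^sup>T (A v + B w) = \<Gamma> V\<^sup>T v + T w\<close>. So it remains to see that \<open>T w\<close> has the law of
  \<open>D w'\<close>, \<open>D = (I - \<Gamma>\<^sup>2)^(1/2)\<close>, \<open>w'\<close> standard Gaussian in \<open>R^M\<close>. Writing \<open>T = D Z\<close> with
  \<open>Z\<close> a partial isometry, an explicit orthogonal dilation \<open>Q\<close> of \<open>Z\<close> in \<open>R^(M+N)\<close> carries a
  Gaussian vector \<open>(y, w)\<close> to one whose first \<open>M\<close> coordinates, multiplied by \<open>D\<close>, give
  \<open>T w\<close>; without \<open>Q\<close> they give \<open>D y\<close>. Invariance of the Gaussian under \<open>Q\<close> concludes.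

  That invariance is proved by induction on the dimension: a Householder reflection of the
  remaining coordinates (invariant by induction) followed by a Givens rotation (invariant by
  Fubini and the planar case) moves the first column of an orthogonal matrix to a basis vector.
\<close>

section \<open>The standard Gaussian on the real line\<close>

definition gauss_density :: "real \<Rightarrow> ennreal" where
  "gauss_density x = ennreal (exp (- pi * x\<^sup>2))"

definition std_gauss :: "real measure" where
  "std_gauss = density lborel gauss_density"

lemma gauss_density_measurable[measurable]: "gauss_density \<in> borel_measurable borel"
  unfolding gauss_density_def by measurable

lemma gauss_density_eq_normal_density:
  "gauss_density x = ennreal (normal_density 0 (1 / sqrt (2 * pi)) x)"
proof -
  have "2 * pi * (1 / sqrt (2 * pi))\<^sup>2 = 1" and "- x\<^sup>2 / (2 * (1 / sqrt (2 * pi))\<^sup>2) = - pi * x\<^sup>2"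
    by (simp_all add: power_divide)
  then show ?thesis unfolding gauss_density_def normal_density_def by simp
qed

lemma prob_space_std_gauss: "prob_space std_gauss"
  unfolding std_gauss_def gauss_density_eq_normal_density
  by (rule prob_space_normal_density) simp

interpretation std_gauss: prob_space std_gauss
  by (rule prob_space_std_gauss)

lemma sets_std_gauss[simp, measurable_cong]: "sets std_gauss = sets borel"
  by (simp add: std_gauss_def)

lemma space_std_gauss[simp]: "space std_gauss = UNIV"
  by (simp add: std_gauss_def)

lemma nn_integral_std_gauss:
  "f \<in> borel_measurable borel \<Longrightarrow> (\<integral>\<^sup>+x. f x \<partial>std_gauss) = (\<integral>\<^sup>+x. gauss_density x * f x \<partial>lborel)"
  unfolding std_gauss_def by (subst nn_integral_density) auto

lemma nn_integral_std_gauss_reflect: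
  assumes [measurable]: "f \<in> borel_measurable borel"
  shows "(\<integral>\<^sup>+y. f (- y) \<partial>std_gauss) = (\<integral>\<^sup>+y. f y \<partial>std_gauss)"
proof -
  have "(\<integral>\<^sup>+y. f y \<partial>std_gauss) = (\<integral>\<^sup>+y. gauss_density y * f y \<partial>lborel)"
    by (rule nn_integral_std_gauss) measurable
  also have "\<dots> = (\<integral>\<^sup>+y. gauss_density (- y) * f (- y) \<partial>lborel)"
    using nn_integral_real_affine[of "\<lambda>y. gauss_density y * f y" "-1" 0] by simp
  also have "\<dots> = (\<integral>\<^sup>+y. f (- y) \<partial>std_gauss)"
    by (simp add: gauss_density_def nn_integral_std_gauss)
  finally show ?thesis ..
qed

lemma nn_integral_lborel_shear_fst:
  fixes g :: "real \<Rightarrow> real \<Rightarrow> ennreal"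
  assumes [measurable]: "case_prod g \<in> borel_measurable (lborel \<Otimes>\<^sub>M lborel)"
  shows "(\<integral>\<^sup>+x. \<integral>\<^sup>+y. g (x + t * y) y \<partial>lborel \<partial>lborel) = (\<integral>\<^sup>+x. \<integral>\<^sup>+y. g x y \<partial>lborel \<partial>lborel)"
proof -
  have "(\<integral>\<^sup>+x. \<integral>\<^sup>+y. g (x + t * y) y \<partial>lborel \<partial>lborel) = (\<integral>\<^sup>+y. \<integral>\<^sup>+x. g (x + t * y) y \<partial>lborel \<partial>lborel)"
    by (rule lborel_pair.Fubini'[symmetric]) measurable
  also have "\<dots> = (\<integral>\<^sup>+y. \<integral>\<^sup>+x. g x y \<partial>lborel \<partial>lborel)"
  proof (rule nn_integral_cong)
    fix y :: real
    have [measurable]: "(\<lambda>x. g x y) \<in> borel_measurable borel" by measurable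
    show "(\<integral>\<^sup>+x. g (x + t * y) y \<partial>lborel) = (\<integral>\<^sup>+x. g x y \<partial>lborel)"
      using nn_integral_real_affine[of "\<lambda>x. g x y" 1 "t * y"] by (simp add: add.commute)
  qed
  also have "\<dots> = (\<integral>\<^sup>+x. \<integral>\<^sup>+y. g x y \<partial>lborel \<partial>lborel)"
    by (rule lborel_pair.Fubini') measurable
  finally show ?thesis .
qed

lemma nn_integral_lborel_shear_snd:
  fixes g :: "real \<Rightarrow> real \<Rightarrow> ennreal"
  assumes [measurable]: "case_prod g \<in> borel_measurable (lborel \<Otimes>\<^sub>M lborel)"
  shows "(\<integral>\<^sup>+x. \<integral>\<^sup>+y. g x (y + t * x) \<partial>lborel \<partial>lborel) = (\<integral>\<^sup>+x. \<integral>\<^sup>+y. g x y \<partial>lborel \<partial>lborel)"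
proof (rule nn_integral_cong)
  fix x :: real
  have [measurable]: "(\<lambda>y. g x y) \<in> borel_measurable borel" by measurable
  show "(\<integral>\<^sup>+y. g x (y + t * x) \<partial>lborel) = (\<integral>\<^sup>+y. g x y \<partial>lborel)"
    using nn_integral_real_affine[of "\<lambda>y. g x y" 1 "t * x"] by (simp add: add.commute)
qed

lemma nn_integral_lborel_neg_neg:
  fixes g :: "real \<Rightarrow> real \<Rightarrow> ennreal"
  assumes [measurable]: "case_prod g \<in> borel_measurable (lborel \<Otimes>\<^sub>M lborel)"
  shows "(\<integral>\<^sup>+x. \<integral>\<^sup>+y. g (- x) (- y) \<partial>lborel \<partial>lborel) = (\<integral>\<^sup>+x. \<integral>\<^sup>+y. g x y \<partial>lborel \<partial>lborel)"
proof -
  have [measurable]: "(\<lambda>x. \<integral>\<^sup>+y. g x y \<partial>lborel) \<in> borel_measurable borel"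
    by measurable
  have "(\<integral>\<^sup>+y. g x (- y) \<partial>lborel) = (\<integral>\<^sup>+y. g x y \<partial>lborel)" for x
    using nn_integral_real_affine[of "\<lambda>y. g x y" "-1" 0] by simp
  then show ?thesis
    using nn_integral_real_affine[of "\<lambda>x. \<integral>\<^sup>+y. g x y \<partial>lborel" "-1" 0] by simp
qed

text \<open>A plane rotation other than the half turn is a product of three shears.\<close>

lemma nn_integral_lborel_rotation:
  fixes g :: "real \<Rightarrow> real \<Rightarrow> ennreal"
  assumes g[measurable]: "case_prod g \<in> borel_measurable (lborel \<Otimes>\<^sub>M lborel)"
    and cs: "c\<^sup>2 + s\<^sup>2 = 1"
  shows "(\<integral>\<^sup>+x. \<integral>\<^sup>+y. g (c * x - s * y) (s * x + c * y) \<partial>lborel \<partial>lborel) = (\<integral>\<^sup>+x. \<integral>\<^sup>+y. g x y \<partial>lborel \<partial>lborel)"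
proof (cases "c = -1")
  case True
  with cs have "s = 0" by simp
  with True show ?thesis using nn_integral_lborel_neg_neg[OF g] by simp
next
  case False
  then have c1: "1 + c \<noteq> 0" by linarith
  define t where "t = s / (1 + c)"
  have ts: "t * s = 1 - c"
  proof -
    have "t * s = s\<^sup>2 / (1 + c)" by (simp add: t_def power2_eq_square)
    also have "s\<^sup>2 = (1 - c) * (1 + c)" using cs by (simp add: algebra_simps power2_eq_square)
    finally show ?thesis using c1 by simp
  qed
  have tc: "t * (1 + c) = s" using c1 by (simp add: t_def)
  define g1 where "g1 x y = g (x - t * y) y" for x y
  define g2 where "g2 x y = g1 x (y + s * x)" for x y
  have [measurable]: "case_prod g1 \<in> borel_measurable (lborel \<Otimes>\<^sub>M lborel)"
    "case_prod g2 \<in> borel_measurable (lborel \<Otimes>\<^sub>M lborel)"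
    unfolding g1_def g2_def by measurable
  have "(x - t * y) - t * (y + s * (x - t * y)) = x - (t * s) * x - t * y * (2 - t * s)" for x y
    by (simp add: algebra_simps)
  also have "x - (t * s) * x - t * y * (2 - t * s) = c * x - (t * (1 + c)) * y" for x y
    unfolding ts by (simp add: algebra_simps)
  finally have 1: "c * x - s * y = (x - t * y) - t * (y + s * (x - t * y))" for x y
    unfolding tc ..
  have "y + s * (x - t * y) = s * x + (1 - t * s) * y" for x y
    by (simp add: algebra_simps)
  then have 2: "s * x + c * y = y + s * (x - t * y)" for x y
    unfolding ts by simp
  have "(\<integral>\<^sup>+x. \<integral>\<^sup>+y. g (c * x - s * y) (s * x + c * y) \<partial>lborel \<partial>lborel)
      = (\<integral>\<^sup>+x. \<integral>\<^sup>+y. g2 (x + (- t) * y) y \<partial>lborel \<partial>lborel)"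
    unfolding 1 2 g2_def g1_def by simp
  also have "\<dots> = (\<integral>\<^sup>+x. \<integral>\<^sup>+y. g2 x y \<partial>lborel \<partial>lborel)"
    by (rule nn_integral_lborel_shear_fst) measurable
  also have "\<dots> = (\<integral>\<^sup>+x. \<integral>\<^sup>+y. g1 x y \<partial>lborel \<partial>lborel)"
    unfolding g2_def by (rule nn_integral_lborel_shear_snd) measurable
  also have "\<dots> = (\<integral>\<^sup>+x. \<integral>\<^sup>+y. g x y \<partial>lborel \<partial>lborel)"
    unfolding g1_def using nn_integral_lborel_shear_fst[OF g, of "- t"] by simp
  finally show ?thesis .
qed

lemma gauss_density_rotation:
  assumes "c\<^sup>2 + s\<^sup>2 = 1"
  shows "gauss_density (c * x - s * y) * gauss_density (s * x + c * y) = gauss_density x * gauss_density y"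
proof -
  have "(c * x - s * y)\<^sup>2 + (s * x + c * y)\<^sup>2 = (c\<^sup>2 + s\<^sup>2) * (x\<^sup>2 + y\<^sup>2)"
    by (simp add: algebra_simps power2_eq_square)
  with assms have "- pi * (c * x - s * y)\<^sup>2 + - pi * (s * x + c * y)\<^sup>2 = - pi * x\<^sup>2 + - pi * y\<^sup>2"
    by (metis distrib_left mult_1)
  then show ?thesis
    unfolding gauss_density_def by (simp add: ennreal_mult'[symmetric] exp_add[symmetric])
qed

lemma nn_integral_pair_std_gauss:
  assumes [measurable]: "case_prod f \<in> borel_measurable (lborel \<Otimes>\<^sub>M lborel)"
  shows "(\<integral>\<^sup>+x. \<integral>\<^sup>+y. f x y \<partial>std_gauss \<partial>std_gauss)
    = (\<integral>\<^sup>+x. \<integral>\<^sup>+y. gauss_density x * gauss_density y * f x y \<partial>lborel \<partial>lborel)"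
proof -
  have "(\<integral>\<^sup>+x. \<integral>\<^sup>+y. f x y \<partial>std_gauss \<partial>std_gauss)
      = (\<integral>\<^sup>+x. gauss_density x * \<integral>\<^sup>+y. gauss_density y * f x y \<partial>lborel \<partial>lborel)"
    by (simp add: nn_integral_std_gauss)
  then show ?thesis
    by (simp add: nn_integral_cmult[symmetric] mult.assoc)
qed

lemma nn_integral_std_gauss_rotation:
  fixes f :: "real \<Rightarrow> real \<Rightarrow> ennreal"
  assumes [measurable]: "case_prod f \<in> borel_measurable (lborel \<Otimes>\<^sub>M lborel)"
    and cs: "c\<^sup>2 + s\<^sup>2 = 1"
  shows "(\<integral>\<^sup>+x. \<integral>\<^sup>+y. f (c * x - s * y) (s * x + c * y) \<partial>std_gauss \<partial>std_gauss)
    = (\<integral>\<^sup>+x. \<integral>\<^sup>+y. f x y \<partial>std_gauss \<partial>std_gauss)"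
proof -
  define g where "g x y = gauss_density x * gauss_density y * f x y" for x y
  have [measurable]: "case_prod g \<in> borel_measurable (lborel \<Otimes>\<^sub>M lborel)"
    unfolding g_def by measurable
  have "(\<integral>\<^sup>+x. \<integral>\<^sup>+y. f (c * x - s * y) (s * x + c * y) \<partial>std_gauss \<partial>std_gauss)
      = (\<integral>\<^sup>+x. \<integral>\<^sup>+y. g (c * x - s * y) (s * x + c * y) \<partial>lborel \<partial>lborel)"
    by (subst nn_integral_pair_std_gauss) (simp_all add: g_def gauss_density_rotation[OF cs])
  also have "\<dots> = (\<integral>\<^sup>+x. \<integral>\<^sup>+y. g x y \<partial>lborel \<partial>lborel)"
    by (rule nn_integral_lborel_rotation) (simp_all add: cs)
  also have "\<dots> = (\<integral>\<^sup>+x. \<integral>\<^sup>+y. f x y \<partial>std_gauss \<partial>std_gauss)"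
    by (simp add: g_def nn_integral_pair_std_gauss)
  finally show ?thesis .
qed

section \<open>Matrices indexed by a finite set\<close>

definition mat_app :: "nat set \<Rightarrow> (nat \<Rightarrow> nat \<Rightarrow> real) \<Rightarrow> (nat \<Rightarrow> real) \<Rightarrow> nat \<Rightarrow> real" where
  "mat_app I A x = (\<lambda>p\<in>I. \<Sum>q\<in>I. A p q * x q)"

definition mat_mult_on :: "nat set \<Rightarrow> (nat \<Rightarrow> nat \<Rightarrow> real) \<Rightarrow> (nat \<Rightarrow> nat \<Rightarrow> real) \<Rightarrow> nat \<Rightarrow> nat \<Rightarrow> real" where
  "mat_mult_on I A B = (\<lambda>p q. \<Sum>r\<in>I. A p r * B r q)"

definition orthogonal_on :: "nat set \<Rightarrow> (nat \<Rightarrow> nat \<Rightarrow> real) \<Rightarrow> bool" where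
  "orthogonal_on I A \<longleftrightarrow> (\<forall>p\<in>I. \<forall>q\<in>I. (\<Sum>r\<in>I. A r p * A r q) = (if p = q then 1 else 0))"

lemma mat_app_extensional: "mat_app I A x \<in> extensional I"
  by (simp add: mat_app_def)

lemma mat_app_cong:
  "(\<And>p q. p \<in> I \<Longrightarrow> q \<in> I \<Longrightarrow> A p q = B p q) \<Longrightarrow> mat_app I A = mat_app I B"
  unfolding mat_app_def by (auto intro!: ext sum.cong)

lemma mat_app_mat_mult_on: "mat_app I (mat_mult_on I A B) x = mat_app I A (mat_app I B x)"
proof
  fix p show "mat_app I (mat_mult_on I A B) x p = mat_app I A (mat_app I B x) p"
  proof (cases "p \<in> I")
    case True
    have "mat_app I (mat_mult_on I A B) x p = (\<Sum>q\<in>I. \<Sum>r\<in>I. A p r * (B r q * x q))"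
      using True by (simp add: mat_app_def mat_mult_on_def sum_distrib_right mult.assoc)
    also have "\<dots> = (\<Sum>r\<in>I. A p r * (\<Sum>q\<in>I. B r q * x q))"
      by (subst sum.swap) (simp add: sum_distrib_left)
    finally show ?thesis using True by (simp add: mat_app_def)
  qed (simp add: mat_app_def)
qed

lemma mat_mult_on_column: "p \<in> I \<Longrightarrow> mat_mult_on I A B p q = mat_app I A (\<lambda>r. B r q) p"
  by (simp add: mat_mult_on_def mat_app_def)

lemma orthogonal_on_mat_mult_on:
  assumes A: "orthogonal_on I A" and B: "orthogonal_on I B" and "finite I"
  shows "orthogonal_on I (mat_mult_on I A B)"
  unfolding orthogonal_on_def
proof (intro ballI)
  fix p q assume p: "p \<in> I" and q: "q \<in> I"
  have "(\<Sum>r\<in>I. mat_mult_on I A B r p * mat_mult_on I A B r q)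
      = (\<Sum>r\<in>I. \<Sum>s\<in>I. \<Sum>t\<in>I. (A r s * A r t) * (B s p * B t q))"
    unfolding mat_mult_on_def sum_product by (intro sum.cong refl) (simp add: algebra_simps)
  also have "\<dots> = (\<Sum>s\<in>I. \<Sum>t\<in>I. \<Sum>r\<in>I. (A r s * A r t) * (B s p * B t q))"
    by (subst sum.swap) (intro sum.cong refl sum.swap)
  also have "\<dots> = (\<Sum>s\<in>I. \<Sum>t\<in>I. (\<Sum>r\<in>I. A r s * A r t) * (B s p * B t q))"
    by (simp add: sum_distrib_right)
  also have "\<dots> = (\<Sum>s\<in>I. B s p * B s q)"
    using A \<open>finite I\<close> unfolding orthogonal_on_def
    by (simp add: if_distrib[where f="\<lambda>z. z * _"] sum.delta cong: if_cong)
  also have "\<dots> = (if p = q then 1 else 0)"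
    using B p q unfolding orthogonal_on_def by simp
  finally show "(\<Sum>r\<in>I. mat_mult_on I A B r p * mat_mult_on I A B r q) = (if p = q then 1 else 0)" .
qed

lemma mat_app_transpose_orthogonal:
  assumes A: "orthogonal_on I A" and "finite I" and x: "x \<in> extensional I"
  shows "mat_app I (\<lambda>p q. A q p) (mat_app I A x) = x"
proof
  fix p show "mat_app I (\<lambda>p q. A q p) (mat_app I A x) p = x p"
  proof (cases "p \<in> I")
    case True
    have "mat_app I (\<lambda>p q. A q p) (mat_app I A x) p = (\<Sum>q\<in>I. \<Sum>r\<in>I. (A q p * A q r) * x r)"
      using True by (simp add: mat_app_def sum_distrib_left mult.assoc)
    also have "\<dots> = (\<Sum>r\<in>I. (\<Sum>q\<in>I. A q p * A q r) * x r)"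
      by (subst sum.swap) (simp add: sum_distrib_right)
    also have "\<dots> = x p"
      using A True \<open>finite I\<close> unfolding orthogonal_on_def
      by (simp add: if_distrib[where f="\<lambda>z. z * _"] sum.delta cong: if_cong)
    finally show ?thesis .
  next
    case False then show ?thesis using x by (simp add: mat_app_def extensional_def)
  qed
qed

lemma orthogonal_on_rows:
  fixes A :: "nat \<Rightarrow> nat \<Rightarrow> real"
  assumes "orthogonal_on {..<n} A" and p: "p < n" and q: "q < n"
  shows "(\<Sum>r<n. A p r * A q r) = (if p = q then 1 else 0)"
proof -
  define X where "X = Matrix.mat n n (\<lambda>(i, j). A i j)"
  have X: "X \<in> carrier_mat n n" and Xt: "transpose_mat X \<in> carrier_mat n n"
    by (simp_all add: X_def)
  have "transpose_mat X * X = 1\<^sub>m n"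
    using assms(1) by (intro eq_matI) (auto simp: X_def scalar_prod_def orthogonal_on_def atLeast0LessThan)
  then have "X * transpose_mat X = 1\<^sub>m n" by (rule mat_mult_left_right_inverse[OF Xt X])
  then have "(X * transpose_mat X) $$ (p, q) = 1\<^sub>m n $$ (p, q)" by simp
  then show ?thesis using p q by (simp add: X_def scalar_prod_def atLeast0LessThan)
qed

definition givens :: "nat \<Rightarrow> nat \<Rightarrow> real \<Rightarrow> real \<Rightarrow> nat \<Rightarrow> nat \<Rightarrow> real" where
  "givens i j c s p q =
    (if p = i then (if q = i then c else 0) + (if q = j then - s else 0)
     else if p = j then (if q = i then s else 0) + (if q = j then c else 0)
     else (if p = q then 1 else 0))"

lemma givens_transpose: "i \<noteq> j \<Longrightarrow> givens i j c (- s) q p = givens i j c s p q"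
  unfolding givens_def by auto

lemma mat_app_givens:
  assumes "finite I" "i \<in> I" "j \<in> I" "i \<noteq> j" and x: "x \<in> extensional I"
  shows "mat_app I (givens i j c s) x = x(i := c * x i - s * x j, j := s * x i + c * x j)"
proof
  fix p show "mat_app I (givens i j c s) x p = (x(i := c * x i - s * x j, j := s * x i + c * x j)) p"
  proof (cases "p \<in> I")
    case True
    have "(\<Sum>q\<in>I. givens i j c s p q * x q) =
        (if p = i then c * x i - s * x j else if p = j then s * x i + c * x j else x p)"
      using assms True
      by (auto simp: givens_def distrib_right sum.distrib sum.delta if_distrib[where f="\<lambda>z. z * _"] cong: if_cong)
    then show ?thesis using True assms by (auto simp: mat_app_def)
  qed (use assms in \<open>auto simp: mat_app_def extensional_def\<close>)
qed

lemma orthogonal_on_givens: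
  assumes "finite I" "i \<in> I" "j \<in> I" "i \<noteq> j" and cs: "c\<^sup>2 + s\<^sup>2 = 1"
  shows "orthogonal_on I (givens i j c s)"
  unfolding orthogonal_on_def
proof (intro ballI)
  fix p q assume p: "p \<in> I" and q: "q \<in> I"
  define K where "K = I - {i, j}"
  have IK: "I = insert i (insert j K)" and K: "i \<notin> K" "j \<notin> K" "finite K"
    using assms by (auto simp: K_def)
  have "(\<Sum>r\<in>K. givens i j c s r p * givens i j c s r q)
      = (\<Sum>r\<in>K. (if r = p then 1 else 0) * (if r = q then 1 else 0))"
    using K by (intro sum.cong refl) (auto simp: givens_def)
  also have "\<dots> = (if p = q \<and> p \<in> K then 1 else 0)"
    using K by (simp add: sum.delta if_distrib[where f="\<lambda>z. z * _"] cong: if_cong)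
  finally have "(\<Sum>r\<in>K. givens i j c s r p * givens i j c s r q) = (if p = q \<and> p \<in> K then 1 else 0)" .
  moreover have "(\<Sum>r\<in>I. givens i j c s r p * givens i j c s r q)
     = givens i j c s i p * givens i j c s i q + givens i j c s j p * givens i j c s j q
       + (\<Sum>r\<in>K. givens i j c s r p * givens i j c s r q)"
    unfolding IK using K assms by (simp add: add.assoc)
  ultimately show "(\<Sum>r\<in>I. givens i j c s r p * givens i j c s r q) = (if p = q then 1 else 0)"
    using p q assms unfolding K_def givens_def
    by (auto simp: power2_eq_square algebra_simps)
qed

lemma orthogonal_on_householder:
  fixes v :: "nat \<Rightarrow> real"
  assumes fin: "finite J" and a: "a\<^sup>2 * (\<Sum>r\<in>J. (v r)\<^sup>2) = 2 * a"
  shows "orthogonal_on J (\<lambda>p q. (if p = q then 1 else 0) - a * v p * v q)"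
  unfolding orthogonal_on_def
proof (intro ballI)
  fix p q assume p: "p \<in> J" and q: "q \<in> J"
  let ?H = "\<lambda>p q. (if p = q then 1 else 0) - a * v p * v q"
  have "?H r p * ?H r q = (if r = p then 1 else 0) * (if r = q then 1 else 0)
      - (if r = p then a * v r * v q else 0) - (if r = q then a * v r * v p else 0)
      + (a\<^sup>2 * v p * v q) * (v r)\<^sup>2" for r
    by (auto simp: algebra_simps power2_eq_square)
  then have "(\<Sum>r\<in>J. ?H r p * ?H r q)
      = (\<Sum>r\<in>J. (if r = p then 1 else 0) * (if r = q then 1 else 0))
        - (\<Sum>r\<in>J. (if r = p then a * v r * v q else 0))
        - (\<Sum>r\<in>J. (if r = q then a * v r * v p else 0))
        + (\<Sum>r\<in>J. (a\<^sup>2 * v p * v q) * (v r)\<^sup>2)"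
    by (simp add: sum.distrib sum_subtractf)
  also have "\<dots> = (if p = q then 1 else 0) - a * v p * v q - a * v q * v p
      + a\<^sup>2 * (\<Sum>r\<in>J. (v r)\<^sup>2) * v p * v q"
    using fin p q by (simp add: sum.delta sum.delta' sum_distrib_left[symmetric]
        if_distrib[where f="\<lambda>z. z * _"] cong: if_cong)
  also have "\<dots> = (if p = q then 1 else 0)"
    unfolding a by (simp add: algebra_simps)
  finally show "(\<Sum>r\<in>J. ?H r p * ?H r q) = (if p = q then 1 else 0)" .
qed

lemma householder_to_axis:
  fixes u :: "nat \<Rightarrow> real"
  assumes fin: "finite J" and j: "j \<in> J"
  obtains H where "orthogonal_on J H" "\<And>p q. H p q = H q p"
    "\<And>p. p \<in> J \<Longrightarrow> (\<Sum>q\<in>J. H p q * u q) = (if p = j then sqrt (\<Sum>q\<in>J. (u q)\<^sup>2) else 0)"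
proof -
  define nrm where "nrm = sqrt (\<Sum>q\<in>J. (u q)\<^sup>2)"
  define v where "v q = u q - (if q = j then nrm else 0)" for q
  define vv where "vv = (\<Sum>q\<in>J. (v q)\<^sup>2)"
  define a where "a = 2 / vv"
  define H where "H p q = (if p = q then 1 else 0) - a * v p * v q" for p q
  have nrm2: "nrm\<^sup>2 = (\<Sum>q\<in>J. (u q)\<^sup>2)"
    unfolding nrm_def by (simp add: sum_nonneg)
  have vu: "(\<Sum>q\<in>J. v q * u q) = nrm\<^sup>2 - nrm * u j"
    using fin j nrm2 by (simp add: v_def left_diff_distrib sum_subtractf power2_eq_square if_distrib[where f="\<lambda>z. z * _"] cong: if_cong)
  have vv: "vv = 2 * (nrm\<^sup>2 - nrm * u j)"
    using fin j nrm2
    by (simp add: vv_def v_def power2_diff sum.distrib sum_subtractf if_distrib[where f="\<lambda>z. z ^ _"] if_distrib[where f="\<lambda>z. _ * z"] cong: if_cong)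
  show ?thesis
  proof
    show "orthogonal_on J H"
      unfolding H_def
      by (rule orthogonal_on_householder[OF fin]) (cases "vv = 0", simp_all add: a_def vv_def power2_eq_square)
    show "H p q = H q p" for p q by (simp add: H_def)
  next
    fix p assume p: "p \<in> J"
    have "(\<Sum>q\<in>J. H p q * u q) = u p - a * v p * (\<Sum>q\<in>J. v q * u q)"
      using fin p by (simp add: H_def left_diff_distrib sum_subtractf sum_distrib_left mult.assoc
          if_distrib[where f="\<lambda>z. z * _"] cong: if_cong)
    also have "\<dots> = u p - v p"
    proof (cases "vv = 0")
      case True
      then have "v p = 0"
        using fin p by (simp add: vv_def sum_nonneg_eq_0_iff)
      then show ?thesis by simp
    next
      case False
      then have "a * (\<Sum>q\<in>J. v q * u q) = 1" by (simp add: a_def vu vv)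
      moreover have "a * v p * (\<Sum>q\<in>J. v q * u q) = v p * (a * (\<Sum>q\<in>J. v q * u q))"
        by (simp only: mult_ac)
      ultimately show ?thesis by simp
    qed
    finally show "(\<Sum>q\<in>J. H p q * u q) = (if p = j then sqrt (\<Sum>q\<in>J. (u q)\<^sup>2) else 0)"
      by (simp add: v_def nrm_def)
  qed
qed

section \<open>Rotation invariance of the Gaussian on \<open>R^I\<close>\<close>

definition gauss_PiM :: "nat set \<Rightarrow> (nat \<Rightarrow> real) measure" where
  "gauss_PiM I = PiM I (\<lambda>_. std_gauss)"

definition gauss_invariant :: "nat set \<Rightarrow> (nat \<Rightarrow> nat \<Rightarrow> real) \<Rightarrow> bool" where
  "gauss_invariant I A \<longleftrightarrow> (\<forall>f \<in> borel_measurable (gauss_PiM I).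
     (\<integral>\<^sup>+x. f (mat_app I A x) \<partial>gauss_PiM I) = (\<integral>\<^sup>+x. f x \<partial>gauss_PiM I))"

interpretation std_gauss_product: product_sigma_finite "\<lambda>_::nat. std_gauss"
  unfolding product_sigma_finite_def using std_gauss.sigma_finite_measure_axioms by simp

lemma space_gauss_PiM: "space (gauss_PiM I) = PiE I (\<lambda>_. UNIV)"
  by (simp add: gauss_PiM_def space_PiM)

lemma sets_gauss_PiM: "sets (gauss_PiM I) = sets (PiM I (\<lambda>_. lborel))"
  unfolding gauss_PiM_def by (intro sets_PiM_cong) simp_all

lemma prob_space_gauss_PiM: "prob_space (gauss_PiM I)"
  unfolding gauss_PiM_def by (rule prob_space_PiM) (rule prob_space_std_gauss)

lemma mat_app_measurable[measurable]: "mat_app I A \<in> measurable (gauss_PiM I) (gauss_PiM I)"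
proof -
  have "mat_app I A \<in> measurable (PiM I (\<lambda>_. std_gauss)) (PiM I (\<lambda>_. std_gauss))"
    unfolding mat_app_def by measurable
  then show ?thesis by (simp add: gauss_PiM_def)
qed

lemma gauss_invariant_comp:
  assumes B: "gauss_invariant I B" and A: "gauss_invariant I A"
    and C: "\<And>x. x \<in> space (gauss_PiM I) \<Longrightarrow> mat_app I C x = mat_app I A (mat_app I B x)"
  shows "gauss_invariant I C"
  unfolding gauss_invariant_def
proof
  fix f :: "_ \<Rightarrow> ennreal" assume f[measurable]: "f \<in> borel_measurable (gauss_PiM I)"
  have "(\<integral>\<^sup>+x. f (mat_app I C x) \<partial>gauss_PiM I) = (\<integral>\<^sup>+x. (\<lambda>y. f (mat_app I A y)) (mat_app I B x) \<partial>gauss_PiM I)"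
    by (intro nn_integral_cong) (simp add: C)
  also have "\<dots> = (\<integral>\<^sup>+x. f (mat_app I A x) \<partial>gauss_PiM I)"
    by (intro bspec[OF B[unfolded gauss_invariant_def]]) measurable
  also have "\<dots> = (\<integral>\<^sup>+x. f x \<partial>gauss_PiM I)"
    using A f unfolding gauss_invariant_def by blast
  finally show "(\<integral>\<^sup>+x. f (mat_app I C x) \<partial>gauss_PiM I) = (\<integral>\<^sup>+x. f x \<partial>gauss_PiM I)" .
qed

lemma gauss_invariant_cong:
  "gauss_invariant I A \<Longrightarrow> (\<And>p q. p \<in> I \<Longrightarrow> q \<in> I \<Longrightarrow> A p q = B p q) \<Longrightarrow> gauss_invariant I B"
  unfolding gauss_invariant_def by (metis mat_app_cong)

lemma gauss_invariant_empty: "gauss_invariant {} A"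
  unfolding gauss_invariant_def
proof (intro ballI nn_integral_cong)
  fix f :: "_ \<Rightarrow> ennreal" and x assume "x \<in> space (gauss_PiM {})"
  then show "f (mat_app {} A x) = f x" by (simp add: space_gauss_PiM mat_app_def restrict_def)
qed

lemma gauss_invariant_insert:
  assumes fin: "finite J" and i: "i \<notin> J" and J: "gauss_invariant J A"
    and sign: "A i i = 1 \<or> A i i = -1" and zero: "\<And>q. q \<in> J \<Longrightarrow> A i q = 0 \<and> A q i = 0"
  shows "gauss_invariant (insert i J) A"
  unfolding gauss_invariant_def
proof
  fix f :: "_ \<Rightarrow> ennreal" assume "f \<in> borel_measurable (gauss_PiM (insert i J))"
  then have f[measurable]: "f \<in> borel_measurable (PiM (insert i J) (\<lambda>_. std_gauss))"
    by (simp add: gauss_PiM_def)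
  define F where "F y = (\<integral>\<^sup>+x. f (x(i := y)) \<partial>gauss_PiM J)" for y
  have upd: "mat_app (insert i J) A (x(i := y)) = (mat_app J A x)(i := A i i * y)" for x y
  proof
    fix p
    have "(\<Sum>q\<in>J. A p q * (x(i := y)) q) = (\<Sum>q\<in>J. A p q * x q)"
      using i by (intro sum.cong) auto
    moreover have "(\<Sum>q\<in>J. A i q * x q) = 0"
      using zero by (intro sum.neutral) auto
    ultimately show "mat_app (insert i J) A (x(i := y)) p = ((mat_app J A x)(i := A i i * y)) p"
      using fin i zero by (auto simp: mat_app_def)
  qed
  have "(\<lambda>p. (snd p)(i := fst p)) \<in> measurable (std_gauss \<Otimes>\<^sub>M PiM J (\<lambda>_. std_gauss)) (PiM (insert i J) (\<lambda>_. std_gauss))"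
    by (rule measurable_fun_upd[where J=J]) auto
  from measurable_comp[OF this f] have "F \<in> borel_measurable std_gauss"
    unfolding F_def gauss_PiM_def
    by (intro sigma_finite_measure.borel_measurable_nn_integral std_gauss_product.sigma_finite fin)
       (simp add: comp_def case_prod_beta')
  then have Fm: "F \<in> borel_measurable borel"
    by (simp cong: measurable_cong_sets)
  have "(\<integral>\<^sup>+x. f (mat_app (insert i J) A x) \<partial>gauss_PiM (insert i J))
      = (\<integral>\<^sup>+y. \<integral>\<^sup>+x. f ((mat_app J A x)(i := A i i * y)) \<partial>gauss_PiM J \<partial>std_gauss)"
    unfolding gauss_PiM_def upd[symmetric]
    by (rule std_gauss_product.product_nn_integral_insert_rev[OF fin i])
       (use mat_app_measurable[of "insert i J" A] in \<open>simp add: gauss_PiM_def\<close>)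
  also have "\<dots> = (\<integral>\<^sup>+y. F (A i i * y) \<partial>std_gauss)"
  proof (rule nn_integral_cong)
    fix y
    have "(\<lambda>x. f (x(i := A i i * y))) \<in> borel_measurable (gauss_PiM J)"
      using measurable_comp[OF measurable_component_update f, OF _ i] by (simp add: comp_def gauss_PiM_def)
    from bspec[OF J[unfolded gauss_invariant_def] this]
    show "(\<integral>\<^sup>+x. f ((mat_app J A x)(i := A i i * y)) \<partial>gauss_PiM J) = F (A i i * y)"
      unfolding F_def by simp
  qed
  also have "\<dots> = (\<integral>\<^sup>+y. F y \<partial>std_gauss)"
    using sign nn_integral_std_gauss_reflect[OF Fm] by auto
  also have "\<dots> = (\<integral>\<^sup>+x. f x \<partial>gauss_PiM (insert i J))"
    unfolding F_def gauss_PiM_def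
    by (rule std_gauss_product.product_nn_integral_insert_rev[OF fin i f, symmetric])
  finally show "(\<integral>\<^sup>+x. f (mat_app (insert i J) A x) \<partial>gauss_PiM (insert i J)) = (\<integral>\<^sup>+x. f x \<partial>gauss_PiM (insert i J))" .
qed

lemma nn_integral_gauss_PiM_insert2:
  assumes K: "finite K" "i \<notin> insert j K" "j \<notin> K"
    and [measurable]: "g \<in> borel_measurable (PiM (insert i (insert j K)) (\<lambda>_. std_gauss))"
  shows "(\<integral>\<^sup>+x. g x \<partial>gauss_PiM (insert i (insert j K)))
    = (\<integral>\<^sup>+w. \<integral>\<^sup>+b. \<integral>\<^sup>+a. g (w(j := b, i := a)) \<partial>std_gauss \<partial>std_gauss \<partial>gauss_PiM K)"
proof -
  have "(\<integral>\<^sup>+x. g x \<partial>gauss_PiM (insert i (insert j K)))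
      = (\<integral>\<^sup>+z. \<integral>\<^sup>+a. g (z(i := a)) \<partial>std_gauss \<partial>PiM (insert j K) (\<lambda>_. std_gauss))"
    unfolding gauss_PiM_def by (rule std_gauss_product.product_nn_integral_insert) (use K in auto)
  also have "\<dots> = (\<integral>\<^sup>+w. \<integral>\<^sup>+b. (\<lambda>z. \<integral>\<^sup>+a. g (z(i := a)) \<partial>std_gauss) (w(j := b)) \<partial>std_gauss \<partial>PiM K (\<lambda>_. std_gauss))"
    by (rule std_gauss_product.product_nn_integral_insert) (use K in auto)
  finally show ?thesis by (simp add: gauss_PiM_def)
qed

lemma gauss_invariant_givens:
  assumes fin: "finite I" and ij: "i \<in> I" "j \<in> I" "i \<noteq> j" and cs: "c\<^sup>2 + s\<^sup>2 = 1"
  shows "gauss_invariant I (givens i j c s)"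
  unfolding gauss_invariant_def
proof
  fix f :: "_ \<Rightarrow> ennreal" assume f: "f \<in> borel_measurable (gauss_PiM I)"
  define K where "K = I - {i, j}"
  have IK: "I = insert j (insert i K)" and K: "finite K" "j \<notin> insert i K" "i \<notin> K"
    using fin ij by (auto simp: K_def)
  have f'[measurable]: "f \<in> borel_measurable (PiM (insert j (insert i K)) (\<lambda>_. std_gauss))"
    using f by (simp add: gauss_PiM_def IK)
  let ?R = "mat_app I (givens i j c s)"
  have slice: "(\<integral>\<^sup>+x. \<integral>\<^sup>+y. f (?R (w(i := x, j := y))) \<partial>std_gauss \<partial>std_gauss)
      = (\<integral>\<^sup>+x. \<integral>\<^sup>+y. f (w(i := x, j := y)) \<partial>std_gauss \<partial>std_gauss)"
    if w: "w \<in> space (gauss_PiM K)" for w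
  proof -
    have "w(i := x, j := y) \<in> extensional I" for x y
      using w K by (auto simp: space_gauss_PiM PiE_def extensional_def IK)
    then have rotate: "?R (w(i := x, j := y)) = w(i := c * x - s * y, j := s * x + c * y)" for x y
      using mat_app_givens[OF fin ij] ij by (auto intro!: ext)
    have "(\<lambda>(x, y). w(i := x, j := y)) \<in> measurable (std_gauss \<Otimes>\<^sub>M std_gauss) (PiM (insert j (insert i K)) (\<lambda>_. std_gauss))"
      using w K unfolding gauss_PiM_def case_prod_beta'
      by (intro measurable_fun_upd[where J="insert i K"] measurable_fun_upd[where J=K]) auto
    from measurable_comp[OF this f']
    have "(\<lambda>(x, y). f (w(i := x, j := y))) \<in> borel_measurable (lborel \<Otimes>\<^sub>M lborel)"
      by (subst measurable_cong_sets[OF sets_pair_measure_cong refl]) (simp_all add: comp_def case_prod_beta')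
    from nn_integral_std_gauss_rotation[OF this cs] show ?thesis
      by (simp add: rotate)
  qed
  have "(\<integral>\<^sup>+x. f (?R x) \<partial>gauss_PiM I)
      = (\<integral>\<^sup>+w. \<integral>\<^sup>+x. \<integral>\<^sup>+y. f (?R (w(i := x, j := y))) \<partial>std_gauss \<partial>std_gauss \<partial>gauss_PiM K)"
    unfolding IK by (rule nn_integral_gauss_PiM_insert2[OF K])
       (use mat_app_measurable[of I] in \<open>simp add: gauss_PiM_def IK\<close>)
  also have "\<dots> = (\<integral>\<^sup>+w. \<integral>\<^sup>+x. \<integral>\<^sup>+y. f (w(i := x, j := y)) \<partial>std_gauss \<partial>std_gauss \<partial>gauss_PiM K)"
    by (intro nn_integral_cong slice)
  also have "\<dots> = (\<integral>\<^sup>+x. f x \<partial>gauss_PiM I)"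
    unfolding IK by (rule nn_integral_gauss_PiM_insert2[OF K f', symmetric])
  finally show "(\<integral>\<^sup>+x. f (?R x) \<partial>gauss_PiM I) = (\<integral>\<^sup>+x. f x \<partial>gauss_PiM I)" .
qed

lemma gauss_invariant_fixing_column:
  assumes fin: "finite J" and i: "i \<notin> J" and orth: "orthogonal_on (insert i J) A"
    and col: "\<And>p. p \<in> insert i J \<Longrightarrow> A p i = (if p = i then 1 else 0)"
    and IH: "orthogonal_on J A \<Longrightarrow> gauss_invariant J A"
  shows "gauss_invariant (insert i J) A"
proof -
  have row: "A i q = (if q = i then 1 else 0)" if q: "q \<in> insert i J" for q
  proof -
    have "(\<Sum>r\<in>insert i J. A r i * A r q) = A i q"
      using fin col by (simp add: if_distrib[where f="\<lambda>z. z * _"] sum.delta cong: if_cong)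
    then show ?thesis using orth q unfolding orthogonal_on_def by auto
  qed
  have "orthogonal_on J A"
    unfolding orthogonal_on_def
  proof (intro ballI)
    fix p q assume p: "p \<in> J" and q: "q \<in> J"
    have "(\<Sum>r\<in>insert i J. A r p * A r q) = (\<Sum>r\<in>J. A r p * A r q)"
      using fin i p row[of p] by auto
    then show "(\<Sum>r\<in>J. A r p * A r q) = (if p = q then 1 else 0)"
      using orth p q unfolding orthogonal_on_def by auto
  qed
  then show ?thesis
    by (rule gauss_invariant_insert[OF fin i IH]) (use row col i in auto)
qed

definition extend_id :: "nat \<Rightarrow> (nat \<Rightarrow> nat \<Rightarrow> real) \<Rightarrow> nat \<Rightarrow> nat \<Rightarrow> real" where
  "extend_id i H p q = (if p = i \<or> q = i then (if p = q then 1 else 0) else H p q)"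

lemma orthogonal_on_extend_id:
  assumes fin: "finite J" and i: "i \<notin> J" and H: "orthogonal_on J H"
  shows "orthogonal_on (insert i J) (extend_id i H)"
  unfolding orthogonal_on_def
proof (intro ballI)
  fix p q assume p: "p \<in> insert i J" and q: "q \<in> insert i J"
  have "(\<Sum>r\<in>J. extend_id i H r p * extend_id i H r q)
      = (if p = i \<or> q = i then 0 else (\<Sum>r\<in>J. H r p * H r q))"
    using i by (auto simp: extend_id_def intro!: sum.neutral sum.cong)
  then show "(\<Sum>r\<in>insert i J. extend_id i H r p * extend_id i H r q) = (if p = q then 1 else 0)"
    using fin i p q H unfolding orthogonal_on_def by (auto simp: extend_id_def)
qed

lemma invariant_householder_to_axis:
  assumes fin: "finite J" and i: "i \<notin> J" and j: "j \<in> J"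
    and IH: "\<And>H. orthogonal_on J H \<Longrightarrow> gauss_invariant J H"
  obtains W where "orthogonal_on (insert i J) W" "gauss_invariant (insert i J) W" "\<And>p q. W p q = W q p"
    "mat_app (insert i J) W u
      = restrict (\<lambda>p. if p = i then u i else if p = j then sqrt (\<Sum>q\<in>J. (u q)\<^sup>2) else 0) (insert i J)"
proof -
  obtain H where H_orth: "orthogonal_on J H" and H_sym: "\<And>p q. H p q = H q p"
    and Hu: "\<And>p. p \<in> J \<Longrightarrow> (\<Sum>q\<in>J. H p q * u q) = (if p = j then sqrt (\<Sum>q\<in>J. (u q)\<^sup>2) else 0)"
    using householder_to_axis[OF fin j] by blast
  show ?thesis
  proof
    show "orthogonal_on (insert i J) (extend_id i H)"
      by (rule orthogonal_on_extend_id[OF fin i H_orth])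
    show "gauss_invariant (insert i J) (extend_id i H)"
      by (rule gauss_invariant_insert[OF fin i gauss_invariant_cong[OF IH[OF H_orth]]])
         (use i in \<open>auto simp: extend_id_def\<close>)
    show "extend_id i H p q = extend_id i H q p" for p q
      by (simp add: extend_id_def H_sym)
    show "mat_app (insert i J) (extend_id i H) u
        = restrict (\<lambda>p. if p = i then u i else if p = j then sqrt (\<Sum>q\<in>J. (u q)\<^sup>2) else 0) (insert i J)"
    proof
      fix p
      have "(\<Sum>q\<in>J. extend_id i H p q * u q) = (if p = i then 0 else (\<Sum>q\<in>J. H p q * u q))"
        using i by (auto simp: extend_id_def intro!: sum.neutral sum.cong)
      then show "mat_app (insert i J) (extend_id i H) u p
          = restrict (\<lambda>p. if p = i then u i else if p = j then sqrt (\<Sum>q\<in>J. (u q)\<^sup>2) else 0) (insert i J) p"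
        using fin i j Hu[of p] by (auto simp: mat_app_def extend_id_def)
    qed
  qed
qed

lemma orthogonal_column_reducer:
  assumes fin: "finite J" and i: "i \<notin> J" and j: "j \<in> J"
    and IH: "\<And>H. orthogonal_on J H \<Longrightarrow> gauss_invariant J H"
    and unit: "(\<Sum>p\<in>insert i J. (u p)\<^sup>2) = 1"
  obtains R where "orthogonal_on (insert i J) R" "gauss_invariant (insert i J) (\<lambda>p q. R q p)"
    "mat_app (insert i J) R u = restrict (\<lambda>p. if p = i then 1 else 0) (insert i J)"
proof -
  let ?I = "insert i J"
  define nrm where "nrm = sqrt (\<Sum>q\<in>J. (u q)\<^sup>2)"
  obtain W where W_orth: "orthogonal_on ?I W" and W_inv: "gauss_invariant ?I W"
    and W_sym: "\<And>p q. W p q = W q p"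
    and Wu: "mat_app ?I W u = restrict (\<lambda>p. if p = i then u i else if p = j then nrm else 0) ?I"
    unfolding nrm_def using invariant_householder_to_axis[OF fin i j IH, where u=u] by blast
  have finI: "finite ?I" and ij: "i \<in> ?I" "j \<in> ?I" "i \<noteq> j" using fin i j by auto
  define G where "G = givens i j (u i) (- nrm)"
  define Gt where "Gt = givens i j (u i) nrm"
  have cs: "(u i)\<^sup>2 + nrm\<^sup>2 = 1" and cs': "(u i)\<^sup>2 + (- nrm)\<^sup>2 = 1"
    using unit fin i by (simp_all add: nrm_def sum_nonneg)
  have G_orth: "orthogonal_on ?I G" unfolding G_def by (rule orthogonal_on_givens[OF finI ij cs'])
  have Gt_inv: "gauss_invariant ?I Gt" unfolding Gt_def by (rule gauss_invariant_givens[OF finI ij cs])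
  have GWu: "mat_app ?I G (mat_app ?I W u) = restrict (\<lambda>p. if p = i then 1 else 0) ?I"
    unfolding Wu G_def mat_app_givens[OF finI ij restrict_extensional]
    using ij cs by (auto simp: power2_eq_square)
  define R where "R = mat_mult_on ?I G W"
  have Rt: "(\<lambda>p q. R q p) = mat_mult_on ?I W Gt"
    using ij givens_transpose[OF ij(3), of "u i" nrm]
    by (auto simp: R_def mat_mult_on_def G_def Gt_def W_sym mult.commute intro!: ext sum.cong)
  show ?thesis
  proof
    show "orthogonal_on ?I R"
      unfolding R_def by (rule orthogonal_on_mat_mult_on[OF G_orth W_orth finI])
    show "gauss_invariant ?I (\<lambda>p q. R q p)"
      by (rule gauss_invariant_comp[OF Gt_inv W_inv]) (simp add: Rt mat_app_mat_mult_on)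
    show "mat_app ?I R u = restrict (\<lambda>p. if p = i then 1 else 0) ?I"
      by (simp add: R_def mat_app_mat_mult_on GWu)
  qed
qed

theorem gauss_invariant_if_orthogonal:
  "finite I \<Longrightarrow> orthogonal_on I A \<Longrightarrow> gauss_invariant I A"
proof (induction I arbitrary: A rule: finite_induct)
  case empty
  show ?case by (rule gauss_invariant_empty)
next
  case (insert i J A)
  let ?I = "insert i J"
  have unit: "(\<Sum>p\<in>?I. (A p i)\<^sup>2) = 1"
    using insert.prems unfolding orthogonal_on_def by (simp add: power2_eq_square)
  show ?case
  proof (cases "J = {}")
    case True
    then have "A i i = 1 \<or> A i i = -1" using unit by (simp add: power2_eq_1_iff)
    with True show ?thesis using gauss_invariant_insert[of "{}" i A] gauss_invariant_empty by auto
  next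
    case False
    then obtain j where j: "j \<in> J" by blast
    obtain R where R: "orthogonal_on ?I R" "gauss_invariant ?I (\<lambda>p q. R q p)"
      and Ru: "mat_app ?I R (\<lambda>p. A p i) = restrict (\<lambda>p. if p = i then 1 else 0) ?I"
      by (rule orthogonal_column_reducer[OF insert.hyps(1,2) j insert.IH unit])
    define B where "B = mat_mult_on ?I R A"
    have B_orth: "orthogonal_on ?I B"
      unfolding B_def by (rule orthogonal_on_mat_mult_on[OF R(1) insert.prems]) (simp add: insert.hyps)
    have "gauss_invariant ?I B"
    proof (rule gauss_invariant_fixing_column[OF insert.hyps(1,2) B_orth _ insert.IH])
      fix p assume "p \<in> ?I"
      then show "B p i = (if p = i then 1 else 0)"
        using fun_cong[OF Ru, of p] by (simp add: B_def mat_mult_on_column)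
    qed
    then show ?thesis
    proof (rule gauss_invariant_comp[OF _ R(2)])
      fix x
      show "mat_app ?I A x = mat_app ?I (\<lambda>p q. R q p) (mat_app ?I B x)"
        unfolding B_def mat_app_mat_mult_on
        by (rule mat_app_transpose_orthogonal[OF R(1) _ mat_app_extensional, symmetric]) (simp add: insert.hyps)
    qed
  qed
qed

section \<open>Gaussian integrals over \<open>R^I\<close> and Lebesgue measure\<close>

interpretation lborel_product: product_sigma_finite "\<lambda>_::nat. (lborel::real measure)"
  unfolding product_sigma_finite_def using lborel.sigma_finite_measure_axioms by simp

lemma gauss_PiM_eq_density:
  assumes fin: "finite I"
  shows "gauss_PiM I = density (PiM I (\<lambda>_. lborel)) (\<lambda>x. \<Prod>i\<in>I. gauss_density (x i))"
  unfolding gauss_PiM_def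
proof (rule std_gauss_product.PiM_eqI[OF fin, symmetric])
  show "sets (density (PiM I (\<lambda>_. lborel)) (\<lambda>x. \<Prod>i\<in>I. gauss_density (x i))) = sets (PiM I (\<lambda>_. std_gauss))"
    unfolding sets_density by (rule sets_PiM_cong) simp_all
next
  fix A assume "\<And>i. i \<in> I \<Longrightarrow> A i \<in> sets std_gauss"
  then have A[measurable]: "\<And>i. i \<in> I \<Longrightarrow> A i \<in> sets borel" by simp
  have PA: "PiE I A \<in> sets (PiM I (\<lambda>_. lborel))"
    using fin by (intro sets_PiM_I_finite) auto
  have "indicator (PiE I A) x = (\<Prod>i\<in>I. indicator (A i) (x i) :: ennreal)"
    if "x \<in> space (PiM I (\<lambda>_. lborel))" for x
    using that fin by (auto simp: indicator_def space_PiM PiE_def Pi_def extensional_def)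
  then have "emeasure (density (PiM I (\<lambda>_. lborel)) (\<lambda>x. \<Prod>i\<in>I. gauss_density (x i))) (PiE I A)
      = (\<integral>\<^sup>+x. (\<Prod>i\<in>I. gauss_density (x i) * indicator (A i) (x i)) \<partial>PiM I (\<lambda>_. lborel))"
    by (simp add: emeasure_density[OF _ PA] prod.distrib cong: nn_integral_cong)
  also have "\<dots> = (\<Prod>i\<in>I. \<integral>\<^sup>+y. gauss_density y * indicator (A i) y \<partial>lborel)"
    by (rule lborel_product.product_nn_integral_prod[OF fin]) measurable
  also have "\<dots> = (\<Prod>i\<in>I. emeasure std_gauss (A i))"
    unfolding std_gauss_def by (intro prod.cong refl emeasure_density[symmetric]) auto
  finally show "emeasure (density (PiM I (\<lambda>_. lborel)) (\<lambda>x. \<Prod>i\<in>I. gauss_density (x i))) (PiE I A)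
      = (\<Prod>i\<in>I. emeasure std_gauss (A i))" .
qed

lemma nn_integral_gauss_PiM:
  assumes fin: "finite I" and [measurable]: "F \<in> borel_measurable (PiM I (\<lambda>_. lborel))"
    and nonneg: "\<And>x. 0 \<le> F x"
  shows "(\<integral>\<^sup>+x. ennreal (F x * exp (- pi * (\<Sum>i\<in>I. (x i)\<^sup>2))) \<partial>PiM I (\<lambda>_. lborel))
    = (\<integral>\<^sup>+x. ennreal (F x) \<partial>gauss_PiM I)"
proof -
  have "(\<Prod>i\<in>I. gauss_density (x i)) * ennreal (F x) = ennreal (F x * exp (- pi * (\<Sum>i\<in>I. (x i)\<^sup>2)))" for x
  proof -
    have "(\<Prod>i\<in>I. gauss_density (x i)) = ennreal (\<Prod>i\<in>I. exp (- pi * (x i)\<^sup>2))"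
      unfolding gauss_density_def by (rule prod_ennreal) simp
    also have "(\<Prod>i\<in>I. exp (- pi * (x i)\<^sup>2)) = exp (- pi * (\<Sum>i\<in>I. (x i)\<^sup>2))"
      by (simp add: exp_sum[OF fin, symmetric] sum_distrib_left)
    finally show ?thesis using nonneg by (simp add: ennreal_mult'[symmetric] mult.commute)
  qed
  then show ?thesis
    unfolding gauss_PiM_eq_density[OF fin] by (subst nn_integral_density) simp_all
qed

lemma nn_integral_gauss_PiM_join:
  assumes "f \<in> borel_measurable (gauss_PiM {..<M+N})"
  shows "(\<integral>\<^sup>+z. f z \<partial>gauss_PiM {..<M+N}) = (\<integral>\<^sup>+y. \<integral>\<^sup>+w. f (join_vw M y w) \<partial>gauss_PiM {..<N} \<partial>gauss_PiM {..<M})"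
proof -
  define J where "J = {M..<M+N}"
  have U: "{..<M+N} = {..<M} \<union> J" and D: "{..<M} \<inter> J = {}" and fJ: "finite J"
    by (auto simp: J_def)
  have [measurable]: "f \<in> borel_measurable (PiM ({..<M} \<union> J) (\<lambda>_. std_gauss))"
    using assms by (simp add: gauss_PiM_def U)
  have shift: "(\<lambda>\<omega>. \<lambda>n\<in>J. \<omega> (n - M)) \<in> measurable (PiM {..<N} (\<lambda>_. std_gauss)) (PiM J (\<lambda>_. std_gauss))"
    by measurable (auto simp: J_def)
  have shift_distr: "distr (PiM {..<N} (\<lambda>_. std_gauss)) (PiM J (\<lambda>_. std_gauss)) (\<lambda>\<omega>. \<lambda>n\<in>J. \<omega> (n - M))
      = PiM J (\<lambda>_. std_gauss)"
  proof -
    have "inj_on (\<lambda>n. n - M) J" and "(\<lambda>n. n - M) \<in> J \<rightarrow> {..<N}"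
      by (auto simp: J_def inj_on_def)
    then show ?thesis
      using distr_PiM_reindex[of "{..<N}" "\<lambda>_. std_gauss" "\<lambda>n. n - M" J] prob_space_std_gauss by simp
  qed
  have "(\<integral>\<^sup>+z. f z \<partial>gauss_PiM {..<M+N})
      = (\<integral>\<^sup>+y. \<integral>\<^sup>+u. f (merge {..<M} J (y, u)) \<partial>PiM J (\<lambda>_. std_gauss) \<partial>PiM {..<M} (\<lambda>_. std_gauss))"
    unfolding gauss_PiM_def U by (rule std_gauss_product.product_nn_integral_fold[OF D _ fJ]) simp_all
  also have "\<dots> = (\<integral>\<^sup>+y. \<integral>\<^sup>+w. f (merge {..<M} J (y, \<lambda>n\<in>J. w (n - M))) \<partial>PiM {..<N} (\<lambda>_. std_gauss) \<partial>PiM {..<M} (\<lambda>_. std_gauss))"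
    by (intro nn_integral_cong, subst shift_distr[symmetric], subst nn_integral_distr[OF shift]) simp_all
  also have "\<dots> = (\<integral>\<^sup>+y. \<integral>\<^sup>+w. f (join_vw M y w) \<partial>gauss_PiM {..<N} \<partial>gauss_PiM {..<M})"
    unfolding gauss_PiM_def
  proof (intro nn_integral_cong)
    fix y w assume "y \<in> space (PiM {..<M} (\<lambda>_. std_gauss))" "w \<in> space (PiM {..<N} (\<lambda>_. std_gauss))"
    then have "merge {..<M} J (y, \<lambda>n\<in>J. w (n - M)) = join_vw M y w"
      by (auto simp: merge_def join_vw_def J_def space_PiM PiE_def extensional_def)
    then show "f (merge {..<M} J (y, \<lambda>n\<in>J. w (n - M))) = f (join_vw M y w)" by simp
  qed
  finally show ?thesis .
qed

section \<open>Products of plane rotations\<close>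

lemma sum_lessThan_add: "(\<Sum>q<m + (n::nat). f q) = (\<Sum>q<m. f q) + (\<Sum>t<n. f (m + t))"
  by (induction n) (simp_all add: add.assoc)

lemma comp_rot_inv_snoc:
  "comp_rot_inv (as @ [\<alpha>]) th z = rot_inv \<alpha> (th (length as)) (comp_rot_inv as th z)"
proof -
  have "fold (\<lambda>l z. rot_inv ((as @ [\<alpha>]) ! l) (th l) z) [0..<length as] z
      = fold (\<lambda>l z. rot_inv (as ! l) (th l) z) [0..<length as] z"
    by (intro fold_cong) (auto simp: nth_append)
  then show ?thesis by (simp add: comp_rot_inv_def)
qed

lemma comp_rot_inv_snoc_apply:
  "comp_rot_inv (as @ [(i, j)]) th z p =
    (let x = comp_rot_inv as th z; t = th (length as) in
     if p = j then x i * sin t + x j * cos t else if p = i then x i * cos t - x j * sin t else x p)"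
  by (simp add: comp_rot_inv_snoc rot_inv_def Let_def)

lemma comp_rot_inv_eq_A_blk:
  assumes "set as \<subseteq> pairs M N" and "p < M + N"
  shows "comp_rot_inv as th z p = (\<Sum>q<M+N. A_blk as th p q * z q)"
  using assms
proof (induction as arbitrary: p z rule: rev_induct)
  case Nil
  then show ?case by (simp add: A_blk_def comp_rot_inv_def if_distrib[where f="\<lambda>z. z * _"] cong: if_cong)
next
  case (snoc \<alpha> as)
  obtain i j where \<alpha>: "\<alpha> = (i, j)" by (cases \<alpha>)
  with snoc.prems have "i < M + N" "j < M + N" by (auto simp: pairs_def)
  with snoc have IH: "comp_rot_inv as th z r = (\<Sum>q<M+N. A_blk as th r q * z q)"
    if "r \<in> {i, j, p}" for r z
    using that by auto
  define c where "c = cos (th (length as))"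
  define s where "s = sin (th (length as))"
  have sums: "(\<Sum>q<M+N. A_blk as th i q * z q) * s + (\<Sum>q<M+N. A_blk as th j q * z q) * c
      = (\<Sum>q<M+N. (A_blk as th i q * s + A_blk as th j q * c) * z q)"
    "(\<Sum>q<M+N. A_blk as th i q * z q) * c - (\<Sum>q<M+N. A_blk as th j q * z q) * s
      = (\<Sum>q<M+N. (A_blk as th i q * c - A_blk as th j q * s) * z q)"
    by (simp_all add: sum_distrib_left sum_distrib_right sum.distrib[symmetric] sum_subtractf[symmetric] algebra_simps)
  have blk: "A_blk (as @ [\<alpha>]) th r q = (if r = j then A_blk as th i q * s + A_blk as th j q * c
      else if r = i then A_blk as th i q * c - A_blk as th j q * s else A_blk as th r q)" for r q
    by (simp add: A_blk_def \<alpha> comp_rot_inv_snoc_apply Let_def c_def s_def)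
  have "comp_rot_inv (as @ [\<alpha>]) th z p = (if p = j then comp_rot_inv as th z i * s + comp_rot_inv as th z j * c
      else if p = i then comp_rot_inv as th z i * c - comp_rot_inv as th z j * s else comp_rot_inv as th z p)"
    by (simp add: \<alpha> comp_rot_inv_snoc_apply Let_def c_def s_def)
  then show ?case
    unfolding blk using sums IH by (simp split: if_splits)
qed

lemma comp_rot_inv_inner:
  assumes "set as \<subseteq> pairs M N"
  shows "(\<Sum>p<M+N. comp_rot_inv as th x p * comp_rot_inv as th y p) = (\<Sum>p<M+N. x p * y p)"
  using assms
proof (induction as rule: rev_induct)
  case Nil
  then show ?case by (simp add: comp_rot_inv_def)
next
  case (snoc \<alpha> as)
  obtain i j where \<alpha>: "\<alpha> = (i, j)" by (cases \<alpha>)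
  with snoc.prems have ij: "i < j" "j < M + N" by (auto simp: pairs_def)
  let ?F = "comp_rot_inv as th"
  define c where "c = cos (th (length as))"
  define s where "s = sin (th (length as))"
  define Di where "Di = (?F x i * c - ?F x j * s) * (?F y i * c - ?F y j * s) - ?F x i * ?F y i"
  define Dj where "Dj = (?F x i * s + ?F x j * c) * (?F y i * s + ?F y j * c) - ?F x j * ?F y j"
  have "Di + Dj = (?F x i * ?F y i + ?F x j * ?F y j) * (c\<^sup>2 + s\<^sup>2 - 1)"
    unfolding Di_def Dj_def by (simp add: algebra_simps power2_eq_square)
  then have D0: "Di + Dj = 0" by (simp add: c_def s_def)
  have "comp_rot_inv (as @ [\<alpha>]) th x p * comp_rot_inv (as @ [\<alpha>]) th y p
      = ?F x p * ?F y p + (if p = i then Di else 0) + (if p = j then Dj else 0)" for p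
    using ij unfolding \<alpha> comp_rot_inv_snoc_apply Let_def Di_def Dj_def c_def s_def
    by (auto simp: algebra_simps)
  then have "(\<Sum>p<M+N. comp_rot_inv (as @ [\<alpha>]) th x p * comp_rot_inv (as @ [\<alpha>]) th y p)
      = (\<Sum>p<M+N. ?F x p * ?F y p) + Di + Dj"
    using ij by (simp add: sum.distrib sum.delta)
  then show ?case using D0 snoc by simp
qed

lemma orthogonal_on_A_blk:
  assumes "set as \<subseteq> pairs M N"
  shows "orthogonal_on {..<M+N} (A_blk as th)"
  unfolding orthogonal_on_def A_blk_def
  using comp_rot_inv_inner[OF assms]
  by (simp add: if_distrib[where f="\<lambda>z. z * _"] sum.delta cong: if_cong)

lemma A_blk_block_rows:
  assumes "set as \<subseteq> pairs M N" "p < M" "p' < M"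
  shows "(\<Sum>q<M. A_blk as th p q * A_blk as th p' q) + (\<Sum>t<N. A_blk as th p (M + t) * A_blk as th p' (M + t))
     = (if p = p' then 1 else 0)"
  using orthogonal_on_rows[OF orthogonal_on_A_blk[OF assms(1)], of p p'] assms
  by (simp add: sum_lessThan_add)

lemma comp_rot_inv_join:
  assumes "set as \<subseteq> pairs M N" "p < M"
  shows "comp_rot_inv as th (join_vw M v w) p
    = (\<Sum>q<M. A_blk as th p q * v q) + (\<Sum>t<N. A_blk as th p (M + t) * w t)"
  using assms by (simp add: comp_rot_inv_eq_A_blk sum_lessThan_add join_vw_def)

section \<open>Linear images of Gaussian vectors\<close>

text \<open>For \<open>Z Z\<^sup>T = P\<close> with \<open>P\<close> a diagonal projection, \<open>dilation_mat M P Z\<close> is the block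
  matrix \<open>[[1 - P, Z], [-Z\<^sup>T, 1 - Z\<^sup>T Z]]\<close>, an orthogonal matrix containing \<open>Z\<close> as a block.\<close>

definition dilation_mat :: "nat \<Rightarrow> (nat \<Rightarrow> real) \<Rightarrow> (nat \<Rightarrow> nat \<Rightarrow> real) \<Rightarrow> nat \<Rightarrow> nat \<Rightarrow> real" where
  "dilation_mat M P Z x y =
    (if x < M then (if y < M then (if x = y then 1 - P x else 0) else Z x (y - M))
     else if y < M then - Z y (x - M)
     else (if x = y then 1 else 0) - (\<Sum>r<M. Z r (x - M) * Z r (y - M)))"

context
  fixes M N :: nat and P :: "nat \<Rightarrow> real" and Z :: "nat \<Rightarrow> nat \<Rightarrow> real"
  assumes ZZt: "\<And>p p'. p < M \<Longrightarrow> p' < M \<Longrightarrow> (\<Sum>t<N. Z p t * Z p' t) = (if p = p' then P p else 0)"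
    and P_01: "\<And>p. P p = 0 \<or> P p = 1"
    and PZ: "\<And>p t. p < M \<Longrightarrow> P p * Z p t = Z p t"
begin

private abbreviation (input) Q where "Q \<equiv> dilation_mat M P Z"
private abbreviation (input) ZtZ where "ZtZ s q \<equiv> \<Sum>r<M. Z r s * Z r q"

private lemma Z_ZtZ: "p < M \<Longrightarrow> (\<Sum>s<N. Z p s * ZtZ s q) = Z p q"
proof -
  assume p: "p < M"
  have "(\<Sum>s<N. Z p s * ZtZ s q) = (\<Sum>r<M. (\<Sum>s<N. Z p s * Z r s) * Z r q)"
    by (simp add: sum_distrib_left sum_distrib_right mult.assoc) (rule sum.swap)
  also have "\<dots> = P p * Z p q"
    using p by (simp add: ZZt if_distrib[where f="\<lambda>z. z * _"] sum.delta cong: if_cong)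
  finally show ?thesis using PZ[OF p] by simp
qed

private lemma ZtZ_idem: "(\<Sum>s<N. ZtZ s q * ZtZ s q') = ZtZ q q'"
proof -
  have "(\<Sum>s<N. ZtZ s q * ZtZ s q') = (\<Sum>s<N. \<Sum>r<M. Z r q * (Z r s * ZtZ s q'))"
    by (simp add: sum_distrib_right mult_ac)
  also have "\<dots> = (\<Sum>r<M. Z r q * (\<Sum>s<N. Z r s * ZtZ s q'))"
    by (subst sum.swap) (simp add: sum_distrib_left)
  finally show ?thesis by (simp add: Z_ZtZ)
qed

private lemma dilation_cross: "p < M \<Longrightarrow> q < N \<Longrightarrow> (\<Sum>r<M+N. Q r p * Q r (M + q)) = 0"
proof -
  assume p: "p < M" and q: "q < N"
  have "(\<Sum>r<M. Q r p * Q r (M + q)) = (1 - P p) * Z p q"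
    using p by (simp add: dilation_mat_def if_distrib[where f="\<lambda>z. z * _"] sum.delta cong: if_cong)
  moreover have "(\<Sum>s<N. Q (M + s) p * Q (M + s) (M + q)) = 0"
  proof -
    have "(\<Sum>s<N. Q (M + s) p * Q (M + s) (M + q)) = (\<Sum>s<N. Z p s * ZtZ s q - (if s = q then Z p s else 0))"
      using p by (intro sum.cong refl) (simp add: dilation_mat_def algebra_simps)
    then show ?thesis using p q by (simp add: sum_subtractf Z_ZtZ)
  qed
  ultimately show ?thesis
    using PZ[OF p] by (simp add: sum_lessThan_add algebra_simps)
qed

lemma orthogonal_on_dilation_mat: "orthogonal_on {..<M+N} Q"
  unfolding orthogonal_on_def
proof (intro ballI)
  fix x y assume x: "x \<in> {..<M+N}" and y: "y \<in> {..<M+N}"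
  consider "x < M" "y < M" | q where "x < M" "y = M + q" "q < N" | q where "x = M + q" "q < N" "y < M"
    | q q' where "x = M + q" "q < N" "y = M + q'" "q' < N"
    using x y by (metis add_less_cancel_left le_Suc_ex lessThan_iff not_less)
  then show "(\<Sum>r\<in>{..<M+N}. Q r x * Q r y) = (if x = y then 1 else 0)"
  proof cases
    case 1
    have "(\<Sum>r<M. Q r x * Q r y) = (if x = y then (1 - P x) * (1 - P x) else 0)"
      using 1 by (simp add: dilation_mat_def if_distrib[where f="\<lambda>z. z * _"] sum.delta cong: if_cong)
    moreover have "(\<Sum>s<N. Q (M + s) x * Q (M + s) y) = (if x = y then P x else 0)"
      using 1 ZZt[of x y] by (simp add: dilation_mat_def)
    moreover have "(1 - P x) * (1 - P x) + P x = 1" using P_01[of x] by auto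
    ultimately show ?thesis by (cases "x = y") (simp_all add: sum_lessThan_add)
  next
    case 2 then show ?thesis using dilation_cross by simp
  next
    case 3 then show ?thesis using dilation_cross[of y q] by (simp add: mult.commute)
  next
    case 4
    have "(\<Sum>r<M. Q r x * Q r y) = ZtZ q q'"
      using 4 by (simp add: dilation_mat_def)
    moreover have "(\<Sum>s<N. Q (M + s) x * Q (M + s) y) = (if q = q' then 1 else 0) - ZtZ q q'"
    proof -
      have "(\<Sum>s<N. Q (M + s) x * Q (M + s) y)
          = (\<Sum>s<N. (if s = q then 1 else 0) * (if s = q' then 1 else 0)
              - (if s = q then ZtZ s q' else 0) - (if s = q' then ZtZ s q else 0) + ZtZ s q * ZtZ s q')"
        using 4 by (intro sum.cong refl) (auto simp: dilation_mat_def algebra_simps)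
      also have "\<dots> = (if q = q' then 1 else 0) - ZtZ q q' - ZtZ q' q + ZtZ q q'"
        using 4 by (simp add: sum.distrib sum_subtractf ZtZ_idem sum.delta if_distrib[where f="\<lambda>z. z * _"] cong: if_cong)
      finally show ?thesis by (simp add: mult.commute)
    qed
    ultimately show ?thesis using 4 by (simp add: sum_lessThan_add)
  qed
qed

end

lemma measurable_restrict_affine:
  fixes c :: "nat \<Rightarrow> real" and C :: "nat \<Rightarrow> nat \<Rightarrow> real"
  assumes "L' \<le> L"
  shows "(\<lambda>z. restrict (\<lambda>p. c p + (\<Sum>q<L'. C p q * z q)) I) \<in> measurable (PiM {..<L} (\<lambda>_. lborel)) (PiM I (\<lambda>_. lborel))"
proof (rule measurable_restrict)
  fix p
  have [measurable]: "(\<lambda>z. z q) \<in> borel_measurable (PiM {..<L} (\<lambda>_. lborel))" if "q < L'" for q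
    using that assms measurable_component_singleton[of q "{..<L}" "\<lambda>_. lborel"] by simp
  show "(\<lambda>z. c p + (\<Sum>q<L'. C p q * z q)) \<in> measurable (PiM {..<L} (\<lambda>_. lborel)) ((\<lambda>_. lborel) p)"
    by simp measurable
qed

lemma nn_integral_gauss_PiM_linear_image:
  fixes T :: "nat \<Rightarrow> nat \<Rightarrow> real" and d :: "nat \<Rightarrow> real"
    and H :: "(nat \<Rightarrow> real) \<Rightarrow> ennreal"
  assumes rows: "\<And>r r'. r < M \<Longrightarrow> r' < M \<Longrightarrow> (\<Sum>t<N. T r t * T r' t) = (if r = r' then (d r)\<^sup>2 else 0)"
    and [measurable]: "H \<in> borel_measurable (PiM {..<M} (\<lambda>_. lborel))"
  shows "(\<integral>\<^sup>+w. H (\<lambda>r\<in>{..<M}. \<Sum>t<N. T r t * w t) \<partial>gauss_PiM {..<N})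
    = (\<integral>\<^sup>+y. H (\<lambda>r\<in>{..<M}. d r * y r) \<partial>gauss_PiM {..<M})"
proof -
  define P where "P r = (if d r = 0 then 0 else (1::real))" for r
  define Z where "Z r t = T r t / d r" for r t
  have T0: "T r t = 0" if "r < M" "d r = 0" "t < N" for r t
  proof -
    have "(\<Sum>t<N. (T r t)\<^sup>2) = 0" using rows[of r r] that by (simp add: power2_eq_square)
    with that show ?thesis by (simp add: sum_nonneg_eq_0_iff)
  qed
  have Q: "orthogonal_on {..<M+N} (dilation_mat M P Z)"
  proof (rule orthogonal_on_dilation_mat)
    fix p p' assume "p < M" "p' < M"
    then show "(\<Sum>t<N. Z p t * Z p' t) = (if p = p' then P p else 0)"
      by (simp add: Z_def P_def rows sum_divide_distrib[symmetric] power2_eq_square)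
  qed (simp_all add: P_def Z_def)
  have Q_app: "d r * mat_app {..<M+N} (dilation_mat M P Z) (join_vw M y w) r = (\<Sum>t<N. T r t * w t)"
    if r: "r < M" for r y w
  proof -
    have "mat_app {..<M+N} (dilation_mat M P Z) (join_vw M y w) r = (1 - P r) * y r + (\<Sum>t<N. Z r t * w t)"
      using r by (simp add: mat_app_def sum_lessThan_add dilation_mat_def join_vw_def
          if_distrib[where f="\<lambda>z. z * _"] sum.delta cong: if_cong)
    then show ?thesis
      using r T0 by (cases "d r = 0") (simp_all add: P_def Z_def sum_distrib_left)
  qed
  define \<Psi> where "\<Psi> z = H (\<lambda>r\<in>{..<M}. d r * z r)" for z
  have "(\<lambda>z. \<lambda>r\<in>{..<M}. 0 + (\<Sum>q<M. (if r = q then d r else 0) * z q)) \<in> measurable (PiM {..<M+N} (\<lambda>_. lborel)) (PiM {..<M} (\<lambda>_. lborel))"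
    by (rule measurable_restrict_affine) simp
  then have "\<Psi> \<in> borel_measurable (PiM {..<M+N} (\<lambda>_. lborel))"
    unfolding \<Psi>_def by (simp add: if_distrib[where f="\<lambda>z. z * _"] sum.delta cong: if_cong)
  then have \<Psi>[measurable]: "\<Psi> \<in> borel_measurable (gauss_PiM {..<M+N})"
    by (simp add: sets_gauss_PiM cong: measurable_cong_sets)
  have emeasure_1: "emeasure (gauss_PiM I) (space (gauss_PiM I)) = 1" for I
    using prob_space.emeasure_space_1[OF prob_space_gauss_PiM] .
  have "(\<integral>\<^sup>+w. H (\<lambda>r\<in>{..<M}. \<Sum>t<N. T r t * w t) \<partial>gauss_PiM {..<N})
      = (\<integral>\<^sup>+z. \<Psi> (mat_app {..<M+N} (dilation_mat M P Z) z) \<partial>gauss_PiM {..<M+N})"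
    by (subst nn_integral_gauss_PiM_join[where f="\<lambda>z. \<Psi> (mat_app _ _ z)"])
       (measurable, simp add: \<Psi>_def Q_app emeasure_1 cong: restrict_cong)
  also have "\<dots> = (\<integral>\<^sup>+z. \<Psi> z \<partial>gauss_PiM {..<M+N})"
    using gauss_invariant_if_orthogonal[OF _ Q] \<Psi> unfolding gauss_invariant_def by simp
  also have "\<dots> = (\<integral>\<^sup>+y. H (\<lambda>r\<in>{..<M}. d r * y r) \<partial>gauss_PiM {..<M})"
    by (subst nn_integral_gauss_PiM_join) (simp_all add: \<Psi>_def join_vw_def emeasure_1 cong: restrict_cong)
  finally show ?thesis .
qed

section \<open>The singular value decomposition of the block \<open>A\<close>\<close>

lemma svd_block_row:
  fixes A B U V :: "nat \<Rightarrow> nat \<Rightarrow> real" and gam :: "nat \<Rightarrow> real"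
  assumes svd: "\<And>p q. p < M \<Longrightarrow> q < M \<Longrightarrow> A p q = (\<Sum>r<M. U p r * gam r * V q r)"
    and U: "orthogonal_on {..<M} U" and p: "p < M"
  shows "(\<Sum>q<M. A p q * v q) + (\<Sum>t<N. B p t * w t)
    = (\<Sum>r<M. U p r * (gam r * (\<Sum>q<M. V q r * v q) + (\<Sum>t<N. (\<Sum>s<M. U s r * B s t) * w t)))"
proof -
  have A_part: "(\<Sum>q<M. A p q * v q) = (\<Sum>r<M. U p r * (gam r * (\<Sum>q<M. V q r * v q)))"
    using p by (simp add: svd sum_distrib_left sum_distrib_right mult.assoc) (rule sum.swap)
  have "(\<Sum>r<M. U p r * (\<Sum>t<N. (\<Sum>s<M. U s r * B s t) * w t))
      = (\<Sum>r<M. \<Sum>s<M. \<Sum>t<N. (U p r * U s r) * (B s t * w t))"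
    by (simp add: sum_distrib_left sum_distrib_right mult_ac) (intro sum.cong refl sum.swap)
  also have "\<dots> = (\<Sum>s<M. (\<Sum>r<M. U p r * U s r) * (\<Sum>t<N. B s t * w t))"
    by (subst sum.swap) (simp only: sum_product)
  also have "\<dots> = (\<Sum>t<N. B p t * w t)"
    using p orthogonal_on_rows[OF U] by (simp add: if_distrib[where f="\<lambda>z. z * _"] sum.delta cong: if_cong)
  finally show ?thesis using A_part by (simp add: distrib_left sum.distrib)
qed

lemma svd_left_mult:
  fixes A U V :: "nat \<Rightarrow> nat \<Rightarrow> real" and gam :: "nat \<Rightarrow> real"
  assumes svd: "\<And>p q. p < M \<Longrightarrow> q < M \<Longrightarrow> A p q = (\<Sum>r<M. U p r * gam r * V q r)"
    and U: "orthogonal_on {..<M} U" and r: "r < M" and q: "q < M"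
  shows "(\<Sum>p<M. U p r * A p q) = gam r * V q r"
proof -
  have "(\<Sum>p<M. U p r * A p q) = (\<Sum>s<M. (\<Sum>p<M. U p r * U p s) * (gam s * V q s))"
    using q by (simp add: svd sum_distrib_left sum_distrib_right mult_ac) (rule sum.swap)
  also have "\<dots> = gam r * V q r"
    using U r unfolding orthogonal_on_def
    by (simp add: if_distrib[where f="\<lambda>z. z * _"] sum.delta cong: if_cong)
  finally show ?thesis .
qed


lemma svd_complement_rows:
  fixes A B U V :: "nat \<Rightarrow> nat \<Rightarrow> real" and gam :: "nat \<Rightarrow> real"
  assumes svd: "\<And>p q. p < M \<Longrightarrow> q < M \<Longrightarrow> A p q = (\<Sum>r<M. U p r * gam r * V q r)"
    and U: "orthogonal_on {..<M} U" and V: "orthogonal_on {..<M} V"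
    and rows: "\<And>p p'. p < M \<Longrightarrow> p' < M \<Longrightarrow>
      (\<Sum>q<M. A p q * A p' q) + (\<Sum>t<N. B p t * B p' t) = (if p = p' then 1 else 0)"
    and r: "r < M" and r': "r' < M"
  shows "(\<Sum>t<N. (\<Sum>p<M. U p r * B p t) * (\<Sum>p<M. U p r' * B p t)) = (if r = r' then 1 - (gam r)\<^sup>2 else 0)"
proof -
  have "(\<Sum>t<N. (\<Sum>p<M. U p r * B p t) * (\<Sum>p<M. U p r' * B p t))
      = (\<Sum>t<N. \<Sum>p<M. \<Sum>p'<M. (U p r * U p' r') * (B p t * B p' t))"
    unfolding sum_product by (intro sum.cong refl) (simp add: algebra_simps)
  also have "\<dots> = (\<Sum>p<M. \<Sum>p'<M. (U p r * U p' r') * (\<Sum>t<N. B p t * B p' t))"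
    by (subst sum.swap) (simp add: sum.swap[of _ "{..<N}"] sum_distrib_left)
  also have "\<dots> = (\<Sum>p<M. \<Sum>p'<M. (if p = p' then U p r * U p' r' else 0)
      - (\<Sum>q<M. (U p r * A p q) * (U p' r' * A p' q)))"
  proof (intro sum.cong refl)
    fix p p' assume "p \<in> {..<M}" "p' \<in> {..<M}"
    then have "(\<Sum>t<N. B p t * B p' t) = (if p = p' then 1 else 0) - (\<Sum>q<M. A p q * A p' q)"
      using rows[of p p'] by simp
    then show "(U p r * U p' r') * (\<Sum>t<N. B p t * B p' t) = (if p = p' then U p r * U p' r' else 0)
        - (\<Sum>q<M. (U p r * A p q) * (U p' r' * A p' q))"
      by (simp add: right_diff_distrib sum_distrib_left mult_ac)
  qed
  also have "\<dots> = (if r = r' then 1 else 0)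
      - (\<Sum>q<M. (\<Sum>p<M. U p r * A p q) * (\<Sum>p'<M. U p' r' * A p' q))"
  proof -
    have "(\<Sum>p<M. \<Sum>p'<M. \<Sum>q<M. (U p r * A p q) * (U p' r' * A p' q))
        = (\<Sum>q<M. (\<Sum>p<M. U p r * A p q) * (\<Sum>p'<M. U p' r' * A p' q))"
      unfolding sum_product by (subst sum.swap) (rule sum.cong, simp, rule sum.swap)
    then show ?thesis
      using U r r' unfolding orthogonal_on_def by (simp add: sum_subtractf sum.delta)
  qed
  also have "\<dots> = (if r = r' then 1 else 0) - (\<Sum>q<M. (gam r * gam r') * (V q r * V q r'))"
  proof -
    have "(\<Sum>p<M. U p s * A p q) = gam s * V q s" if "s < M" "q < M" for s q
      by (rule svd_left_mult[where A=A and U=U and V=V]) (use svd U that in auto)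
    then show ?thesis
      using r r' by (intro arg_cong2[where f="(-)"] refl sum.cong) (simp_all add: mult_ac)
  qed
  finally show ?thesis
    using V r r' unfolding orthogonal_on_def
    by (simp add: sum_distrib_left[symmetric] power2_eq_square)
qed

lemma h0U_cong: "(\<And>q. q < M \<Longrightarrow> x q = x' q) \<Longrightarrow> h0U M h0 U x = h0U M h0 U x'"
  unfolding h0U_def by (metis (no_types, lifting) lessThan_iff restrict_ext sum.cong)

lemma nn_integral_block_row_svd:
  fixes A B U V :: "nat \<Rightarrow> nat \<Rightarrow> real" and gam :: "nat \<Rightarrow> real"
    and h0 :: "(nat \<Rightarrow> real) \<Rightarrow> real" and v :: "nat \<Rightarrow> real"
  assumes h0_meas[measurable]: "h0 \<in> borel_measurable (PiM {..<M} (\<lambda>_. lborel))"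
    and h0_nonneg: "\<And>x. 0 \<le> h0 x"
    and U: "orthogonal_on {..<M} U" and V: "orthogonal_on {..<M} V"
    and gam_range: "\<And>r. r < M \<Longrightarrow> 0 \<le> gam r \<and> gam r \<le> 1"
    and svd: "\<And>p q. p < M \<Longrightarrow> q < M \<Longrightarrow> A p q = (\<Sum>r<M. U p r * gam r * V q r)"
    and rows: "\<And>p p'. p < M \<Longrightarrow> p' < M \<Longrightarrow>
      (\<Sum>q<M. A p q * A p' q) + (\<Sum>t<N. B p t * B p' t) = (if p = p' then 1 else 0)"
  shows "(\<integral>\<^sup>+w. ennreal (h0 (\<lambda>p\<in>{..<M}. (\<Sum>q<M. A p q * v q) + (\<Sum>t<N. B p t * w t))
              * exp (- pi * (\<Sum>i<N. (w i)\<^sup>2))) \<partial>PiM {..<N} (\<lambda>_. lborel))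
       = (\<integral>\<^sup>+w. ennreal (h0U M h0 U (\<lambda>r. gam r * (\<Sum>q<M. V q r * v q) + sqrt (1 - (gam r)\<^sup>2) * w r)
              * exp (- pi * (\<Sum>i<M. (w i)\<^sup>2))) \<partial>PiM {..<M} (\<lambda>_. lborel))"
proof -
  define a where "a r = gam r * (\<Sum>q<M. V q r * v q)" for r
  define d where "d r = sqrt (1 - (gam r)\<^sup>2)" for r
  define T where "T r t = (\<Sum>s<M. U s r * B s t)" for r t
  define H where "H y = ennreal (h0U M h0 U (\<lambda>r. a r + y r))" for y
  have h0U_affine: "h0U M h0 U (\<lambda>r. a r + y r) = h0 (\<lambda>p\<in>{..<M}. (\<Sum>q<M. U p q * a q) + (\<Sum>q<M. U p q * y q))" for y
    unfolding h0U_def by (simp add: distrib_left sum.distrib)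
  have "(\<lambda>y. \<lambda>p\<in>{..<M}. (\<Sum>q<M. U p q * a q) + (\<Sum>q<M. U p q * y q))
      \<in> measurable (PiM {..<M} (\<lambda>_. lborel)) (PiM {..<M} (\<lambda>_. lborel))"
    by (rule measurable_restrict_affine) simp
  then have H_meas: "H \<in> borel_measurable (PiM {..<M} (\<lambda>_. lborel))"
    unfolding H_def h0U_affine by measurable
  have H_restrict: "H (restrict y {..<M}) = ennreal (h0U M h0 U (\<lambda>r. a r + y r))" for y
    unfolding H_def by (intro arg_cong[where f=ennreal] h0U_cong) simp
  have T_rows: "(\<Sum>t<N. T r t * T r' t) = (if r = r' then (d r)\<^sup>2 else 0)" if "r < M" "r' < M" for r r'
  proof -
    have "(gam r)\<^sup>2 \<le> 1" using gam_range[OF that(1)] by (simp add: power_le_one)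
    with svd_complement_rows[OF svd U V rows that] show ?thesis
      by (cases "r = r'") (simp_all add: T_def d_def)
  qed
  have LHS_meas: "(\<lambda>w. h0 (\<lambda>p\<in>{..<M}. (\<Sum>q<M. A p q * v q) + (\<Sum>t<N. B p t * w t)))
      \<in> borel_measurable (PiM {..<N} (\<lambda>_. lborel))"
    using measurable_restrict_affine[of N N "\<lambda>p. \<Sum>q<M. A p q * v q" B "{..<M}"] by measurable
  have RHS_meas: "(\<lambda>w. h0U M h0 U (\<lambda>r. a r + d r * w r)) \<in> borel_measurable (PiM {..<M} (\<lambda>_. lborel))"
    using measurable_restrict_affine[of M M "\<lambda>p. \<Sum>q<M. U p q * a q" "\<lambda>p q. U p q * d q" "{..<M}"]
    by (simp add: h0U_affine mult.assoc) measurable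
  have "(\<integral>\<^sup>+w. ennreal (h0 (\<lambda>p\<in>{..<M}. (\<Sum>q<M. A p q * v q) + (\<Sum>t<N. B p t * w t))
            * exp (- pi * (\<Sum>i<N. (w i)\<^sup>2))) \<partial>PiM {..<N} (\<lambda>_. lborel))
      = (\<integral>\<^sup>+w. ennreal (h0 (\<lambda>p\<in>{..<M}. (\<Sum>q<M. A p q * v q) + (\<Sum>t<N. B p t * w t))) \<partial>gauss_PiM {..<N})"
    by (rule nn_integral_gauss_PiM[OF finite_lessThan LHS_meas h0_nonneg])
  also have "\<dots> = (\<integral>\<^sup>+w. H (\<lambda>r\<in>{..<M}. \<Sum>t<N. T r t * w t) \<partial>gauss_PiM {..<N})"
    unfolding H_restrict
    using svd_block_row[where A=A and U=U and V=V and gam=gam, OF svd U]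
    by (auto simp: h0U_def T_def a_def intro!: nn_integral_cong arg_cong[where f="\<lambda>x. ennreal (h0 x)"] restrict_ext)
  also have "\<dots> = (\<integral>\<^sup>+y. H (\<lambda>r\<in>{..<M}. d r * y r) \<partial>gauss_PiM {..<M})"
    by (rule nn_integral_gauss_PiM_linear_image[OF T_rows H_meas])
  also have "\<dots> = (\<integral>\<^sup>+w. ennreal (h0U M h0 U (\<lambda>r. gam r * (\<Sum>q<M. V q r * v q) + sqrt (1 - (gam r)\<^sup>2) * w r)
              * exp (- pi * (\<Sum>i<M. (w i)\<^sup>2))) \<partial>PiM {..<M} (\<lambda>_. lborel))"
    unfolding H_restrict a_def d_def
    by (rule nn_integral_gauss_PiM[OF finite_lessThan RHS_meas[unfolded a_def d_def], THEN sym])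
       (simp add: h0U_def h0_nonneg)
  finally show ?thesis .
qed

theorem theorem3p2:
  fixes M N k :: nat and lS lR mu :: real and rho :: "real \<Rightarrow> real"
    and h0 :: "(nat \<Rightarrow> real) \<Rightarrow> real" and v :: "nat \<Rightarrow> real"
    and U V :: "(nat \<times> nat) list \<Rightarrow> (nat \<Rightarrow> real) \<Rightarrow> nat \<Rightarrow> nat \<Rightarrow> real"
    and gam :: "(nat \<times> nat) list \<Rightarrow> (nat \<Rightarrow> real) \<Rightarrow> nat \<Rightarrow> real"
  assumes "0 < M" "0 < N" "0 < lS" "0 < lR" "0 < mu"
    and rho_meas: "rho \<in> borel_measurable lborel"
    and rho_nonneg: "\<And>x. x \<in> {-pi..pi} \<Longrightarrow> 0 \<le> rho x"
    and rho_int: "(\<integral>\<^sup>+ x. ennreal (indicator {-pi..pi} x * rho x) \<partial>lborel) = 1"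
    and h0_meas: "h0 \<in> borel_measurable (PiM {..<M} (\<lambda>_. lborel))"
    and h0_nonneg: "\<And>x. 0 \<le> h0 x"
    and h0_int: "(\<integral>\<^sup>+ x. ennreal (h0 x * exp (- pi * (\<Sum>i<M. (x i)\<^sup>2))) \<partial>(PiM {..<M} (\<lambda>_. lborel))) = 1"
    and U_orth: "\<And>as th p q. as \<in> seqs M N k \<Longrightarrow> p < M \<Longrightarrow> q < M \<Longrightarrow>
        (\<Sum>r<M. U as th r p * U as th r q) = (if p = q then 1 else 0)"
    and V_orth: "\<And>as th p q. as \<in> seqs M N k \<Longrightarrow> p < M \<Longrightarrow> q < M \<Longrightarrow>
        (\<Sum>r<M. V as th r p * V as th r q) = (if p = q then 1 else 0)"
    and gam_range: "\<And>as th j. as \<in> seqs M N k \<Longrightarrow> j < M \<Longrightarrow> 0 \<le> gam as th j \<and> gam as th j \<le> 1"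
    and svd: "\<And>as th p q. as \<in> seqs M N k \<Longrightarrow> p < M \<Longrightarrow> q < M \<Longrightarrow>
        A_blk as th p q = (\<Sum>r<M. U as th p r * gam as th r * V as th q r)"
  shows "hk M N lS lR mu rho h0 k v =
    (\<Sum>as\<in>seqs M N k.
       ennreal (\<Prod>l<k. lam M N lS lR mu (as ! l)) *
       (\<integral>\<^sup>+ th. ennreal (\<Prod>l<k. indicator {-pi..pi} (th l) * rho (th l)) *
          (\<integral>\<^sup>+ w. ennreal (h0U M h0 (U as th)
                    (\<lambda>r. gam as th r * (\<Sum>q<M. V as th q r * v q)
                         + sqrt (1 - (gam as th r)\<^sup>2) * w r)
                  * exp (- pi * (\<Sum>i<M. (w i)\<^sup>2)))
            \<partial>(PiM {..<M} (\<lambda>_. lborel)))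
        \<partial>(PiM {..<k} (\<lambda>_. lborel))))"
  unfolding hk_def
proof (intro sum.cong refl arg_cong2[where f="(*)"] nn_integral_cong)
  fix as th assume as: "as \<in> seqs M N k"
  \<comment> \<open>The identity holds for each \<open>\<alpha>\<close> and \<open>\<theta>\<close> separately.\<close>
  then have pairs: "set as \<subseteq> pairs M N" by (simp add: seqs_def)
  have "restrict (comp_rot_inv as th (join_vw M v w)) {..<M}
      = (\<lambda>p\<in>{..<M}. (\<Sum>q<M. A_blk as th p q * v q) + (\<Sum>t<N. A_blk as th p (M + t) * w t))" for w
    by (intro restrict_ext comp_rot_inv_join[OF pairs]) simp
  moreover have "orthogonal_on {..<M} (U as th)" "orthogonal_on {..<M} (V as th)"
    using U_orth[OF as] V_orth[OF as] by (simp_all add: orthogonal_on_def)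
  ultimately show "(\<integral>\<^sup>+ w. ennreal (h0 (restrict (comp_rot_inv as th (join_vw M v w)) {..<M})
        * exp (- pi * (\<Sum>i<N. (w i)\<^sup>2))) \<partial>(PiM {..<N} (\<lambda>_. lborel)))
    = (\<integral>\<^sup>+ w. ennreal (h0U M h0 (U as th)
          (\<lambda>r. gam as th r * (\<Sum>q<M. V as th q r * v q) + sqrt (1 - (gam as th r)\<^sup>2) * w r)
        * exp (- pi * (\<Sum>i<M. (w i)\<^sup>2))) \<partial>(PiM {..<M} (\<lambda>_. lborel)))"
    using nn_integral_block_row_svd[OF h0_meas h0_nonneg _ _ gam_range[OF as] svd[OF as]
        A_blk_block_rows[OF pairs]]
    by simp
qed

end
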